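(* Fix one of the two variants $\sharp\in\{\text{lumped},\text{exact}\}$ described in the context. Suppose $\partial_0I=\emptyset$, let $\vec X^m\in\underline V^h$ satisfy assumption $(\mathfrak A)$, and let $0<\Delta t_m<3\min_{\overline I}(\vec X^m\cdot\vec e_1)^2$. Then there exists a pair $(\delta\vec X^{m+1},\vec\kappa^{m+1})\in\underline V^h_\partial\times\underline V^h$ such that, with $\vec X^{m+1}=\vec X^m+\delta\vec X^{m+1}$, $$\Big(\vec X^m\cdot\vec e_1\,\tfrac{\vec X^{m+1}-\vec X^m}{\Delta t_m},\vec\chi\,|\vec X^m_\rho|\Big)_\sharp=\Big((\vec X^m\cdot\vec e_1)\vec\kappa^{m+1},\vec\chi\,|\vec X^m_\rho|\Big)_\sharp\quad\forall\,\vec\chi\in\underline V^h,$$ $$\Big((\vec X^m\cdot\vec e_1)\vec\kappa^{m+1},\vec\eta\,|\vec X^m_\rho|\Big)_\sharp+\big(\vec\eta\cdot\vec e_1,|\vec X^{m+1}_\rho|\big)+\Big((\vec X^m\cdot\vec e_1)\vec X^{m+1}_\rho,\vec\eta_\rho|\vec X^m_\rho|^{-1}\Big)$$ $$=-\sum_{p\in\partial_1I}\widehat\varrho^{(p)}(\vec X^m(p)\cdot\vec e_1)\,\vec\eta(p)\cdot\vec e_2-\sum_{p\in\partial_2I}\Big(\big([\widehat\varrho^{(p)}]_+\vec X^{m+1}(p)+[\widehat\varrho^{(p)}]_-\vec X^m(p)\big)\cdot\vec e_1\Big)\,\vec\eta(p)\cdot\vec e_1\quad\forall\,\vec\eta\in\underline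 V^h_\partial .$$
   Context: Setup. $\vec e_1=(1,0)^T$, $\vec e_2=(0,1)^T$; "$\cdot$" is the Euclidean inner product; $[r]_+=\max\{r,0\}$, $[r]_-=-\max\{-r,0\}$. $I$ is either the periodic interval $\mathbb R/\mathbb Z$ (with $\partial I=\emptyset$) or $I=(0,1)$ (with $\partial I=\{0,1\}$). $\partial I=\partial_DI\cup\partial_0I\cup\partial_1I\cup\partial_2I$ is a given disjoint partition, and $\widehat\varrho^{(p)}\in\mathbb R$, $p\in\{0,1\}$, are given constants with $|\widehat\varrho^{(p)}|\le1$. Let $J\ge3$, $h=1/J$, $q_j=jh$ ($j=0,\dots,J$; $q_0=q_J$ identified in the periodic case). $V^h$ is the space of continuous functions on $\overline I$ (periodic if $I=\mathbb R/\mathbb Z$) that are affine on each $[q_{j-1},q_j]$; $\underline V^h=[V^h]^2$; $\underline V^h_\partial=\{\vec\eta\in\underline V^h:\vec\eta(\rho)\cdot\vec e_1=0\ \forall\rho\in\partial_0I;\ \vec\eta(\rho)\cdot\vec e_i=0\ \forall\rho\in\partial_iI,\ i=1,2;\ \vec\eta(\rho)=\vec0\ \forall\rho\in\partial_DI\}$. $(\cdot,\cdot)$ is the $L^2(I)$ inner product (with dot product for vector functions), and for piecewise continuous $f,g$ the mass-lumped product is $(f,g)^h=\tfrac h2\sum_{j=1}^J[(fg)(q_j^-)+(fg)(q_{j-1}^+)]$. Two variants: in the "lumped" variant $(\cdot,\cdot)_\sharp=(\cdot,\cdot)^h$; in the "exact" variant $(\cdot,\cdot)_\sharp=(\cdot,\cdot)$.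 Assumption $(\mathfrak A)$: $|\vec X^m_\rho|>0$ a.e. on $I$ and $\vec X^m(\rho)\cdot\vec e_1>0$ for all $\rho\in\overline I\setminus\partial_0I$. *)

theory Defs
  imports "HOL-Analysis.Analysis"
begin

text \<open>Functions on the closure of I are represented as functions real => _ whose
  values are only relevant on [0,1]. The flag per selects I = R/Z (per = True)
  or I = (0,1) (per = False).\<close>

definition e1 :: "real \<times> real" where "e1 = (1, 0)"
definition e2 :: "real \<times> real" where "e2 = (0, 1)"

definition posp :: "real \<Rightarrow> real" where "posp r = max r 0"
definition negp :: "real \<Rightarrow> real" where "negp r = - max (- r) 0"

definition node :: "nat \<Rightarrow> nat \<Rightarrow> real" where "node J j = real j / real J"

definition bdry :: "bool \<Rightarrow> real set" where
  "bdry per = (if per then {} else {0, 1})"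

definition Vh :: "bool \<Rightarrow> nat \<Rightarrow> (real \<Rightarrow> 'a::real_normed_vector) set" where
  "Vh per J = {f. continuous_on {0..1} f
      \<and> (\<forall>j\<in>{1..J}. \<exists>a b. \<forall>x\<in>{node J (j - 1)..node J j}. f x = a + x *\<^sub>R b)
      \<and> (per \<longrightarrow> f 0 = f 1)}"

definition Vh_bd :: "bool \<Rightarrow> nat \<Rightarrow> real set \<Rightarrow> real set \<Rightarrow> real set \<Rightarrow> real set
     \<Rightarrow> (real \<Rightarrow> real \<times> real) set" where
  "Vh_bd per J PD P0 P1 P2 = {eta \<in> Vh per J.
      (\<forall>r\<in>P0. eta r \<bullet> e1 = 0) \<and> (\<forall>r\<in>P1. eta r \<bullet> e1 = 0)
      \<and> (\<forall>r\<in>P2. eta r \<bullet> e2 = 0) \<and> (\<forall>r\<in>PD. eta r = 0)}"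

text \<open>Derivative with respect to rho (exists away from the nodes).\<close>
definition drho :: "(real \<Rightarrow> real \<times> real) \<Rightarrow> real \<Rightarrow> real \<times> real" where
  "drho f r = vector_derivative f (at r)"

text \<open>Mass-lumped inner product applied to the (piecewise continuous) integrand F = f g:
  h/2 * sum_j [ F(q_j^-) + F(q_{j-1}^+) ].\<close>
definition lumped_ip :: "nat \<Rightarrow> (real \<Rightarrow> real) \<Rightarrow> real" where
  "lumped_ip J F = (1 / real J) / 2 *
     (\<Sum>j=1..J. Lim (at_left (node J j)) F + Lim (at_right (node J (j - 1))) F)"

definition exact_ip :: "(real \<Rightarrow> real) \<Rightarrow> real" where
  "exact_ip F = integral {0..1} F"

definition sharp_ip :: "bool \<Rightarrow> nat \<Rightarrow> (real \<Rightarrow> real) \<Rightarrow> real" where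
  "sharp_ip lump J F = (if lump then lumped_ip J F else exact_ip F)"

end

theory Submission
  imports Defs
begin

text \<open>With \<open>\<kappa> = \<delta>X / \<Delta>t\<close> the first equation holds trivially, and the second says that a form
  \<open>\<Phi>(c)(e)\<close>, linear in the nodal values \<open>e\<close> of the test function, vanishes at the nodal values \<open>c\<close>
  of \<open>\<delta>X\<close>. This form is strongly monotone in \<open>c\<close>: on each element the mass term contributes
  \<open>(X\<cdot>e\<^sub>1) |X\<^sub>\<rho>| |\<delta>X|\<^sup>2 / \<Delta>t\<close> and the stiffness term \<open>(X\<cdot>e\<^sub>1) |\<delta>X\<^sub>\<rho>|\<^sup>2 / |X\<^sub>\<rho>|\<close>, and by Young's
  inequality these dominate the cross term \<open>|\<delta>X| |\<delta>X\<^sub>\<rho>|\<close> coming from \<open>(\<eta>\<cdot>e\<^sub>1, |X\<^sup>m\<^sup>+\<^sup>1\<^sub>\<rho>|)\<close> as long as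
  \<open>\<Delta>t < 4 min (X\<cdot>e\<^sub>1)\<^sup>2\<close>; the boundary term is monotone because \<open>[\<rho>]\<^sub>+ \<ge> 0\<close>. The form is also
  Lipschitz in \<open>c\<close>, so on the finite-dimensional space of admissible nodal values the damped
  iteration \<open>c \<mapsto> c - \<tau> \<nabla>\<Phi>(c)\<close> is a contraction, whose fixed point is the required zero.\<close>

section \<open>Zeros of strongly monotone forms in finitely many coordinates\<close>

definition vanishing_outside :: "'i set \<Rightarrow> ('i \<Rightarrow> real) set" where
  "vanishing_outside S = {w. \<forall>i. i \<notin> S \<longrightarrow> w i = 0}"

lemma Metric_space_L2_set:
  assumes "finite S"
  shows "Metric_space (vanishing_outside S) (\<lambda>u v. L2_set (\<lambda>i. u i - v i) S)"
proof
  fix u v w :: "'a \<Rightarrow> real"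
  show "L2_set (\<lambda>i. u i - v i) S = L2_set (\<lambda>i. v i - u i) S"
    by (simp add: L2_set_def power2_commute)
  show "u \<in> vanishing_outside S \<Longrightarrow> v \<in> vanishing_outside S \<Longrightarrow> L2_set (\<lambda>i. u i - v i) S = 0 \<longleftrightarrow> u = v"
    using assms by (auto simp: L2_set_eq_0_iff vanishing_outside_def fun_eq_iff)
  show "L2_set (\<lambda>i. u i - w i) S \<le> L2_set (\<lambda>i. u i - v i) S + L2_set (\<lambda>i. v i - w i) S"
    using L2_set_triangle_ineq[of "\<lambda>i. u i - v i" "\<lambda>i. v i - w i" S] by simp
qed simp

lemma mcomplete_L2_set:
  assumes S: "finite S"
  shows "Metric_space.mcomplete (vanishing_outside S) (\<lambda>u v. L2_set (\<lambda>i. u i - v i) S)"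
proof -
  interpret Metric_space "vanishing_outside S" "\<lambda>u v. L2_set (\<lambda>i. u i - v i) S"
    by (rule Metric_space_L2_set[OF S])
  show ?thesis
    unfolding mcomplete_def
  proof (intro allI impI)
    fix \<sigma> assume \<sigma>: "MCauchy \<sigma>"
    then have \<sigma>W: "\<sigma> n \<in> vanishing_outside S" for n
      unfolding MCauchy_def by auto
    then have outside: "(\<lambda>n. \<sigma> n i) = (\<lambda>n. 0)" if "i \<notin> S" for i
      using that by (auto simp: vanishing_outside_def)
    have coord: "convergent (\<lambda>n. \<sigma> n i)" for i
    proof (cases "i \<in> S")
      case True
      have "Cauchy (\<lambda>n. \<sigma> n i)"
      proof (rule metric_CauchyI)
        fix e :: real assume "e > 0"
        then obtain N where N: "\<And>n n'. N \<le> n \<Longrightarrow> N \<le> n' \<Longrightarrow> L2_set (\<lambda>i. \<sigma> n i - \<sigma> n' i) S < e"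
          using \<sigma> unfolding MCauchy_def by meson
        have "dist (\<sigma> n i) (\<sigma> n' i) < e" if "N \<le> n" "N \<le> n'" for n n'
          using member_le_L2_set[OF S True, of "\<lambda>i. \<bar>\<sigma> n i - \<sigma> n' i\<bar>"] N[OF that]
          by (simp add: dist_real_def L2_set_def)
        then show "\<exists>N. \<forall>n\<ge>N. \<forall>n'\<ge>N. dist (\<sigma> n i) (\<sigma> n' i) < e" by blast
      qed
      then show ?thesis by (simp add: Cauchy_convergent_iff)
    next
      case False
      then show ?thesis by (simp add: outside convergent_const)
    qed
    define l where "l i = lim (\<lambda>n. \<sigma> n i)" for i
    have l: "(\<lambda>n. \<sigma> n i) \<longlonglongrightarrow> l i" for i
      using coord by (simp add: l_def convergent_LIMSEQ_iff)
    have "l i = 0" if "i \<notin> S" for i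
      using l[of i] outside[OF that] LIMSEQ_const_iff by metis
    then have lW: "l \<in> vanishing_outside S" by (simp add: vanishing_outside_def)
    have "(\<lambda>n. L2_set (\<lambda>i. \<sigma> n i - l i) S) \<longlonglongrightarrow> L2_set (\<lambda>i. l i - l i) S"
      unfolding L2_set_def by (intro tendsto_intros l)
    then have "\<forall>\<^sub>F n in sequentially. L2_set (\<lambda>i. \<sigma> n i - l i) S < e" if "e > 0" for e
      using that by (auto simp: L2_set_def order_tendsto_iff)
    then show "\<exists>x. limitin mtopology \<sigma> x sequentially"
      using \<sigma>W lW by (auto simp: limitin_metric intro!: exI[of _ l])
  qed
qed

lemma linear_form_eq_sum_coordinates:
  fixes \<Psi> :: "('i \<Rightarrow> real) \<Rightarrow> real"
  assumes S: "finite S"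
    and add: "\<And>u v. u \<in> vanishing_outside S \<Longrightarrow> v \<in> vanishing_outside S \<Longrightarrow> \<Psi> (\<lambda>i. u i + v i) = \<Psi> u + \<Psi> v"
    and scale: "\<And>u a. u \<in> vanishing_outside S \<Longrightarrow> \<Psi> (\<lambda>i. a * u i) = a * \<Psi> u"
    and v: "v \<in> vanishing_outside S"
  shows "\<Psi> v = (\<Sum>k\<in>S. v k * \<Psi> (\<lambda>i. if i = k then 1 else 0))"
proof -
  define \<delta> where "\<delta> k = (\<lambda>i. if i = k then 1 else (0::real))" for k :: 'i
  have partial_sums: "\<Psi> (\<lambda>i. \<Sum>k\<in>T. v k * \<delta> k i) = (\<Sum>k\<in>T. v k * \<Psi> (\<delta> k))" if "T \<subseteq> S" for T
    using finite_subset[OF that S] that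
  proof (induction T rule: finite_induct)
    case empty
    then show ?case using scale[of "\<lambda>i. 0" 0] by (simp add: vanishing_outside_def)
  next
    case (insert k T)
    have \<delta>W: "(\<lambda>i. v k * \<delta> k i) \<in> vanishing_outside S" and sW: "(\<lambda>i. \<Sum>k\<in>T. v k * \<delta> k i) \<in> vanishing_outside S"
      using insert.prems by (auto simp: vanishing_outside_def \<delta>_def intro!: sum.neutral)
    have "\<Psi> (\<lambda>i. \<Sum>k\<in>insert k T. v k * \<delta> k i) = \<Psi> (\<lambda>i. v k * \<delta> k i) + \<Psi> (\<lambda>i. \<Sum>k\<in>T. v k * \<delta> k i)"
      using insert.hyps add[OF \<delta>W sW] by simp
    also have "\<dots> = (\<Sum>k\<in>insert k T. v k * \<Psi> (\<delta> k))"
      using insert scale[of "\<delta> k" "v k"] by (simp add: vanishing_outside_def \<delta>_def)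
    finally show ?case .
  qed
  have "(\<lambda>i. \<Sum>k\<in>S. v k * \<delta> k i) = v"
    using v S by (auto simp: fun_eq_iff \<delta>_def vanishing_outside_def if_distrib cong: if_cong)
  then show ?thesis
    using partial_sums[of S] by (simp add: \<delta>_def)
qed

lemma power2_L2_set: "(L2_set f A)\<^sup>2 = (\<Sum>i\<in>A. (f i)\<^sup>2)"
  by (simp add: L2_set_def sum_nonneg)

text \<open>One damped step \<open>u - \<tau> g\<close> with \<open>\<tau> = \<mu> / (\<Lambda>\<^sup>2 + \<mu>\<^sup>2)\<close> contracts: expanding the square,
  \<open>1 - 2 \<tau> \<mu> + \<tau>\<^sup>2 \<Lambda>\<^sup>2 \<le> 1 - \<tau> \<mu>\<close>.\<close>
lemma L2_set_damped_step_le: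
  fixes u g :: "'i \<Rightarrow> real"
  assumes \<mu>: "\<mu> > 0"
    and mono: "\<mu> * (L2_set u S)\<^sup>2 \<le> (\<Sum>i\<in>S. u i * g i)"
    and lip: "L2_set g S \<le> \<Lambda> * L2_set u S"
  shows "L2_set (\<lambda>i. u i - \<mu> / (\<Lambda>\<^sup>2 + \<mu>\<^sup>2) * g i) S \<le> sqrt (1 - \<mu>\<^sup>2 / (\<Lambda>\<^sup>2 + \<mu>\<^sup>2)) * L2_set u S"
proof -
  define \<tau> where "\<tau> = \<mu> / (\<Lambda>\<^sup>2 + \<mu>\<^sup>2)"
  define N where "N = (L2_set u S)\<^sup>2"
  have \<tau>: "\<tau> > 0" "\<tau> * (\<Lambda>\<^sup>2 + \<mu>\<^sup>2) = \<mu>"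
    using \<mu> by (auto simp: \<tau>_def add_nonneg_pos)
  have q: "1 - \<mu>\<^sup>2 / (\<Lambda>\<^sup>2 + \<mu>\<^sup>2) = 1 - \<tau> * \<mu>"
    by (simp add: \<tau>_def power2_eq_square)
  have "(L2_set (\<lambda>i. u i - \<tau> * g i) S)\<^sup>2 = N - 2 * \<tau> * (\<Sum>i\<in>S. u i * g i) + \<tau>\<^sup>2 * (L2_set g S)\<^sup>2"
    unfolding N_def power2_L2_set
    by (simp add: power2_eq_square algebra_simps sum.distrib sum_subtractf sum_distrib_left)
  also have "\<dots> \<le> N - 2 * \<tau> * (\<mu> * N) + \<tau>\<^sup>2 * (\<Lambda>\<^sup>2 * N)"
  proof -
    have "(L2_set g S)\<^sup>2 \<le> (\<Lambda> * L2_set u S)\<^sup>2"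
      using lip by (intro power_mono) auto
    then show ?thesis
      using mono \<tau> unfolding N_def
      by (intro add_mono diff_mono order_refl mult_left_mono) (auto simp: power_mult_distrib)
  qed
  also have "\<dots> \<le> (1 - \<tau> * \<mu>) * N"
  proof -
    have "\<tau>\<^sup>2 * \<Lambda>\<^sup>2 \<le> \<tau> * (\<tau> * (\<Lambda>\<^sup>2 + \<mu>\<^sup>2))"
      using \<mu> by (simp add: power2_eq_square algebra_simps)
    then have "1 - 2 * \<tau> * \<mu> + \<tau>\<^sup>2 * \<Lambda>\<^sup>2 \<le> 1 - \<tau> * \<mu>"
      unfolding \<tau>(2) by (simp add: algebra_simps)
    then show ?thesis
      by (rule order_trans[rotated, OF mult_right_mono]) (auto simp: N_def algebra_simps)
  qed
  finally have "(L2_set (\<lambda>i. u i - \<tau> * g i) S)\<^sup>2 \<le> (1 - \<tau> * \<mu>) * (L2_set u S)\<^sup>2"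
    by (simp add: N_def)
  then show ?thesis
    unfolding q \<tau>_def[symmetric] by (metis L2_set_nonneg real_le_rsqrt real_sqrt_mult real_sqrt_unique)
qed

lemma strongly_monotone_Lipschitz_has_zero:
  fixes F :: "('i \<Rightarrow> real) \<Rightarrow> 'i \<Rightarrow> real"
  assumes S: "finite S" and \<mu>: "\<mu> > 0"
    and FW: "\<And>w. w \<in> vanishing_outside S \<Longrightarrow> F w \<in> vanishing_outside S"
    and mono: "\<And>w w'. w \<in> vanishing_outside S \<Longrightarrow> w' \<in> vanishing_outside S \<Longrightarrow>
      \<mu> * (L2_set (\<lambda>i. w i - w' i) S)\<^sup>2 \<le> (\<Sum>i\<in>S. (w i - w' i) * (F w i - F w' i))"
    and lip: "\<And>w w'. w \<in> vanishing_outside S \<Longrightarrow> w' \<in> vanishing_outside S \<Longrightarrow>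
      L2_set (\<lambda>i. F w i - F w' i) S \<le> \<Lambda> * L2_set (\<lambda>i. w i - w' i) S"
  shows "\<exists>w\<in>vanishing_outside S. F w = (\<lambda>i. 0)"
proof -
  define \<tau> where "\<tau> = \<mu> / (\<Lambda>\<^sup>2 + \<mu>\<^sup>2)"
  define G where "G w = (\<lambda>i. w i - \<tau> * F w i)" for w
  have \<tau>: "\<tau> > 0"
    using \<mu> by (auto simp: \<tau>_def add_nonneg_pos)
  have factor: "sqrt (1 - \<mu>\<^sup>2 / (\<Lambda>\<^sup>2 + \<mu>\<^sup>2)) < 1"
    using \<mu> by (simp add: add_nonneg_pos)
  have contraction: "L2_set (\<lambda>i. G w i - G w' i) S \<le> sqrt (1 - \<mu>\<^sup>2 / (\<Lambda>\<^sup>2 + \<mu>\<^sup>2)) * L2_set (\<lambda>i. w i - w' i) S"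
    if "w \<in> vanishing_outside S" "w' \<in> vanishing_outside S" for w w'
  proof -
    have "(\<lambda>i. G w i - G w' i) = (\<lambda>i. (w i - w' i) - \<tau> * (F w i - F w' i))"
      by (simp add: G_def fun_eq_iff algebra_simps)
    then show ?thesis
      using L2_set_damped_step_le[OF \<mu> mono[OF that] lip[OF that]] by (simp add: \<tau>_def)
  qed
  have GW: "G \<in> vanishing_outside S \<rightarrow> vanishing_outside S"
    using FW by (auto simp: G_def vanishing_outside_def)
  obtain w where w: "w \<in> vanishing_outside S" "G w = w"
    by (rule Metric_space.Banach_fixedpoint_thm[OF Metric_space_L2_set[OF S] mcomplete_L2_set[OF S] _ GW factor])
      (use contraction in \<open>auto simp: vanishing_outside_def\<close>)
  then have "F w = (\<lambda>i. 0)"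
    using \<tau> by (auto simp: G_def fun_eq_iff)
  then show ?thesis using w by blast
qed

lemma strongly_monotone_form_has_zero:
  fixes \<Psi> :: "('i \<Rightarrow> real) \<Rightarrow> ('i \<Rightarrow> real) \<Rightarrow> real"
  assumes S: "finite S" and \<mu>: "\<mu> > 0"
    and add: "\<And>w u v. w \<in> vanishing_outside S \<Longrightarrow> u \<in> vanishing_outside S \<Longrightarrow> v \<in> vanishing_outside S
      \<Longrightarrow> \<Psi> w (\<lambda>i. u i + v i) = \<Psi> w u + \<Psi> w v"
    and scale: "\<And>w u a. w \<in> vanishing_outside S \<Longrightarrow> u \<in> vanishing_outside S
      \<Longrightarrow> \<Psi> w (\<lambda>i. a * u i) = a * \<Psi> w u"
    and mono: "\<And>w w'. w \<in> vanishing_outside S \<Longrightarrow> w' \<in> vanishing_outside S \<Longrightarrow>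
      \<mu> * (L2_set (\<lambda>i. w i - w' i) S)\<^sup>2 \<le> \<Psi> w (\<lambda>i. w i - w' i) - \<Psi> w' (\<lambda>i. w i - w' i)"
    and lip: "\<And>w w' v. w \<in> vanishing_outside S \<Longrightarrow> w' \<in> vanishing_outside S \<Longrightarrow> v \<in> vanishing_outside S
      \<Longrightarrow> \<bar>\<Psi> w v - \<Psi> w' v\<bar> \<le> \<Lambda> * L2_set (\<lambda>i. w i - w' i) S * L2_set v S"
  shows "\<exists>w\<in>vanishing_outside S. \<forall>v\<in>vanishing_outside S. \<Psi> w v = 0"
proof -
  define F where "F w = (\<lambda>k. if k \<in> S then \<Psi> w (\<lambda>i. if i = k then 1 else 0) else 0)" for w
  have FW: "F w \<in> vanishing_outside S" for w
    by (simp add: F_def vanishing_outside_def)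
  have F_represents: "\<Psi> w u = (\<Sum>i\<in>S. u i * F w i)"
    if "w \<in> vanishing_outside S" "u \<in> vanishing_outside S" for w u
  proof -
    have "(\<Sum>i\<in>S. u i * F w i) = (\<Sum>k\<in>S. u k * \<Psi> w (\<lambda>i. if i = k then 1 else 0))"
      by (rule sum.cong) (simp_all add: F_def)
    then show ?thesis
      using linear_form_eq_sum_coordinates[where \<Psi>="\<Psi> w" and v=u] S add scale that by auto
  qed
  have Fdiff: "\<Psi> w u - \<Psi> w' u = (\<Sum>i\<in>S. u i * (F w i - F w' i))"
    if "w \<in> vanishing_outside S" "w' \<in> vanishing_outside S" "u \<in> vanishing_outside S" for w w' u
    using that by (simp add: F_represents right_diff_distrib sum_subtractf)
  have F_Lipschitz: "L2_set (\<lambda>i. F w i - F w' i) S \<le> \<bar>\<Lambda>\<bar> * L2_set (\<lambda>i. w i - w' i) S"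
    if w: "w \<in> vanishing_outside S" and w': "w' \<in> vanishing_outside S" for w w'
  proof -
    define g where "g = (\<lambda>i. F w i - F w' i)"
    have gW: "g \<in> vanishing_outside S" using FW[of w] FW[of w'] by (simp add: g_def vanishing_outside_def)
    have "(L2_set g S)\<^sup>2 = \<Psi> w g - \<Psi> w' g"
      using Fdiff[OF w w' gW] unfolding power2_L2_set by (simp add: power2_eq_square g_def)
    also have "\<dots> \<le> \<bar>\<Lambda>\<bar> * L2_set (\<lambda>i. w i - w' i) S * L2_set g S"
    proof -
      have "\<Lambda> * (L2_set (\<lambda>i. w i - w' i) S * L2_set g S) \<le> \<bar>\<Lambda>\<bar> * (L2_set (\<lambda>i. w i - w' i) S * L2_set g S)"
        by (intro mult_right_mono) auto
      then show ?thesis using lip[OF w w' gW] by (simp add: mult.assoc)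
    qed
    finally have sq: "L2_set g S * L2_set g S \<le> (\<bar>\<Lambda>\<bar> * L2_set (\<lambda>i. w i - w' i) S) * L2_set g S"
      by (simp add: power2_eq_square)
    have "L2_set g S \<le> \<bar>\<Lambda>\<bar> * L2_set (\<lambda>i. w i - w' i) S"
    proof (cases "L2_set g S = 0")
      case False
      then have "0 < L2_set g S" using L2_set_nonneg[of g S] by linarith
      then show ?thesis using mult_right_le_imp_le[OF sq] by simp
    qed simp
    then show ?thesis by (simp add: g_def)
  qed
  obtain w where w: "w \<in> vanishing_outside S" "F w = (\<lambda>i. 0)"
  proof (rule bexE[OF strongly_monotone_Lipschitz_has_zero[OF S \<mu> FW _ F_Lipschitz]])
    fix w w' assume w: "w \<in> vanishing_outside S" and w': "w' \<in> vanishing_outside S"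
    then have "(\<lambda>i. w i - w' i) \<in> vanishing_outside S" by (simp add: vanishing_outside_def)
    then show "\<mu> * (L2_set (\<lambda>i. w i - w' i) S)\<^sup>2 \<le> (\<Sum>i\<in>S. (w i - w' i) * (F w i - F w' i))"
      using mono[OF w w'] Fdiff[OF w w'] by simp
  qed
  then have "\<Psi> w v = 0" if "v \<in> vanishing_outside S" for v
    using F_represents[OF w(1) that] w(2) by simp
  then show ?thesis using w(1) by blast
qed

section \<open>Continuous piecewise affine functions\<close>

definition element :: "nat \<Rightarrow> nat \<Rightarrow> real set" where
  "element J j = {node J (j - 1)..node J j}"

definition nodal :: "nat \<Rightarrow> (real \<Rightarrow> real \<times> real) \<Rightarrow> nat \<Rightarrow> real \<times> real" where
  "nodal J f i = f (node J i)"

definition elem_coord :: "nat \<Rightarrow> nat \<Rightarrow> real \<Rightarrow> real" where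
  "elem_coord J j t = (t - node J (j - 1)) * real J"

definition elem_interp :: "nat \<Rightarrow> (nat \<Rightarrow> real \<times> real) \<Rightarrow> nat \<Rightarrow> real \<Rightarrow> real \<times> real" where
  "elem_interp J c j t = c (j - 1) + elem_coord J j t *\<^sub>R (c j - c (j - 1))"

definition elem_slope :: "nat \<Rightarrow> (nat \<Rightarrow> real \<times> real) \<Rightarrow> nat \<Rightarrow> real \<times> real" where
  "elem_slope J c j = real J *\<^sub>R (c j - c (j - 1))"

definition hat_fun :: "nat \<Rightarrow> nat \<Rightarrow> real \<Rightarrow> real" where
  "hat_fun J i t = max 0 (1 - \<bar>t * real J - real i\<bar>)"

definition nodal_interp :: "nat \<Rightarrow> (nat \<Rightarrow> real \<times> real) \<Rightarrow> real \<Rightarrow> real \<times> real" where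
  "nodal_interp J c t = (\<Sum>i\<le>J. hat_fun J i t *\<^sub>R c i)"

lemma node_0 [simp]: "node J 0 = 0"
  by (simp add: node_def)

lemma node_J [simp]: "J > 0 \<Longrightarrow> node J J = 1"
  by (simp add: node_def)

lemma node_diff: "J > 0 \<Longrightarrow> j \<ge> 1 \<Longrightarrow> node J j - node J (j - 1) = 1 / real J"
  by (simp add: node_def of_nat_diff field_simps)

lemma node_less:
  assumes "J > 0" "j \<ge> 1"
  shows "node J (j - 1) < node J j"
proof -
  have "0 < 1 / real J" using assms by simp
  then show ?thesis using node_diff[OF assms] by linarith
qed

lemma node_mono: "i \<le> j \<Longrightarrow> node J i \<le> node J j"
  by (simp add: node_def divide_right_mono)

lemma element_subset:
  assumes "j \<in> {1..J}"
  shows "element J j \<subseteq> {0..1}"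
proof -
  have "J > 0" using assms by auto
  then show ?thesis
    using node_mono[of 0 "j - 1" J] node_mono[of j J J] assms by (auto simp: element_def)
qed

lemma element_ends: "J > 0 \<Longrightarrow> j \<ge> 1 \<Longrightarrow> node J (j - 1) \<in> element J j \<and> node J j \<in> element J j"
  using node_less[of J j] by (auto simp: element_def)

lemma content_element: "J > 0 \<Longrightarrow> j \<ge> 1 \<Longrightarrow> Henstock_Kurzweil_Integration.content (element J j) = 1 / real J"
  using node_diff[of J j] node_less[of J j] by (simp add: element_def)

lemma integrable_element: "continuous_on (element J j) f \<Longrightarrow> f integrable_on element J j"
  for f :: "real \<Rightarrow> real"
  unfolding element_def by (rule integrable_continuous_interval)

lemma elem_coord_range:
  assumes J: "J > 0" and j: "j \<ge> 1" and t: "t \<in> element J j"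
  shows "0 \<le> elem_coord J j t \<and> elem_coord J j t \<le> 1"
proof -
  have "0 \<le> t - node J (j - 1)" "t - node J (j - 1) \<le> 1 / real J"
    using t node_diff[OF J j] by (auto simp: element_def)
  then show ?thesis using J by (auto simp: elem_coord_def field_simps)
qed

lemma elem_interp_convex:
  "elem_interp J c j t = (1 - elem_coord J j t) *\<^sub>R c (j - 1) + elem_coord J j t *\<^sub>R c j"
  by (simp add: elem_interp_def algebra_simps)

lemma elem_interp_left: "elem_interp J c j (node J (j - 1)) = c (j - 1)"
  by (simp add: elem_interp_def elem_coord_def)

lemma elem_interp_right: "J > 0 \<Longrightarrow> j \<ge> 1 \<Longrightarrow> elem_interp J c j (node J j) = c j"
  using node_diff[of J j] by (simp add: elem_interp_def elem_coord_def)

lemma elem_interp_add: "elem_interp J (\<lambda>i. a i + b i) j t = elem_interp J a j t + elem_interp J b j t"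
  by (simp add: elem_interp_def algebra_simps)

lemma elem_interp_diff: "elem_interp J (\<lambda>i. a i - b i) j t = elem_interp J a j t - elem_interp J b j t"
  by (simp add: elem_interp_def algebra_simps)

lemma elem_interp_scale: "elem_interp J (\<lambda>i. r *\<^sub>R a i) j t = r *\<^sub>R elem_interp J a j t"
  by (simp add: elem_interp_def algebra_simps)

lemma elem_slope_add: "elem_slope J (\<lambda>i. a i + b i) j = elem_slope J a j + elem_slope J b j"
  by (simp add: elem_slope_def algebra_simps)

lemma elem_slope_scale: "elem_slope J (\<lambda>i. r *\<^sub>R a i) j = r *\<^sub>R elem_slope J a j"
  by (simp add: elem_slope_def algebra_simps)

lemma continuous_on_elem_interp: "continuous_on S (elem_interp J c j)"
  unfolding elem_interp_def elem_coord_def by (intro continuous_intros)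

lemma has_vector_derivative_elem_interp:
  "(elem_interp J c j has_vector_derivative elem_slope J c j) (at t within S)"
  unfolding elem_interp_def elem_coord_def elem_slope_def
  by (auto intro!: derivative_eq_intros)

lemma norm_elem_interp_le:
  assumes "J > 0" "j \<ge> 1" "t \<in> element J j"
  shows "norm (elem_interp J c j t) \<le> (1 - elem_coord J j t) * norm (c (j - 1)) + elem_coord J j t * norm (c j)"
  using norm_triangle_ineq[of "(1 - elem_coord J j t) *\<^sub>R c (j - 1)" "elem_coord J j t *\<^sub>R c j"]
    elem_coord_range[OF assms]
  by (simp add: elem_interp_convex)

lemma norm_elem_interp_le_sum:
  assumes "J > 0" "j \<ge> 1" "t \<in> element J j"
  shows "norm (elem_interp J c j t) \<le> norm (c (j - 1)) + norm (c j)"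
proof -
  have "(1 - elem_coord J j t) * norm (c (j - 1)) \<le> norm (c (j - 1))"
    "elem_coord J j t * norm (c j) \<le> norm (c j)"
    using elem_coord_range[OF assms] by (auto intro!: mult_left_le_one_le)
  then show ?thesis using norm_elem_interp_le[OF assms, of c] by linarith
qed

lemma Vh_eq_elem_interp:
  assumes f: "f \<in> Vh per J" and J: "J > 0" and j: "j \<in> {1..J}" and t: "t \<in> element J j"
  shows "f t = elem_interp J (nodal J f) j t"
proof -
  from f j obtain a b where ab: "\<forall>x\<in>element J j. f x = a + x *\<^sub>R b"
    unfolding Vh_def element_def by blast
  have ends: "node J (j - 1) \<in> element J j" "node J j \<in> element J j"
    using element_ends[OF J] j by auto
  have "nodal J f j - nodal J f (j - 1) = (node J j - node J (j - 1)) *\<^sub>R b"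
    using ab ends by (simp add: nodal_def algebra_simps)
  then have "nodal J f j - nodal J f (j - 1) = (1 / real J) *\<^sub>R b"
    using node_diff[OF J] j by simp
  then show ?thesis
    using ab ends t J by (simp add: elem_interp_def elem_coord_def nodal_def algebra_simps)
qed

lemma drho_Vh:
  assumes f: "f \<in> Vh per J" and J: "J > 0" and j: "j \<in> {1..J}"
    and t: "t \<in> {node J (j - 1)<..<node J j}"
  shows "drho f t = elem_slope J (nodal J f) j"
proof -
  have "(f has_vector_derivative elem_slope J (nodal J f) j) (at t)"
  proof (rule has_vector_derivative_transform_within_open)
    show "elem_interp J (nodal J f) j y = f y" if "y \<in> {node J (j - 1)<..<node J j}" for y
      using Vh_eq_elem_interp[OF f J j, of y] that by (auto simp: element_def)
  qed (use t has_vector_derivative_elem_interp in auto)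
  then show ?thesis unfolding drho_def by (rule vector_derivative_at)
qed

lemma hat_fun_on_element:
  assumes J: "J > 0" and j: "j \<in> {1..J}" and t: "t \<in> element J j"
  shows "hat_fun J i t = (if i = j - 1 then 1 - elem_coord J j t else if i = j then elem_coord J j t else 0)"
proof -
  have tJ: "real j - 1 \<le> t * real J" "t * real J \<le> real j"
    using t J j by (auto simp: element_def node_def of_nat_diff field_simps)
  have "i < j - 1 \<or> i = j - 1 \<or> i = j \<or> j < i" by linarith
  then show ?thesis
    using tJ j by (auto simp: hat_fun_def elem_coord_def node_def of_nat_diff field_simps)
qed

lemma nodal_interp_on_element:
  assumes J: "J > 0" and j: "j \<in> {1..J}" and t: "t \<in> element J j"
  shows "nodal_interp J c t = elem_interp J c j t"
proof -
  have "nodal_interp J c t = (\<Sum>i\<in>{j - 1, j}. hat_fun J i t *\<^sub>R c i)"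
    unfolding nodal_interp_def
    by (rule sum.mono_neutral_right) (use j hat_fun_on_element[OF J j t] in auto)
  also have "\<dots> = elem_interp J c j t"
  proof -
    have "j - 1 \<noteq> j" using j by auto
    then show ?thesis using hat_fun_on_element[OF J j t] by (simp add: elem_interp_convex)
  qed
  finally show ?thesis .
qed

lemma nodal_interp_node: "J > 0 \<Longrightarrow> i \<le> J \<Longrightarrow> nodal_interp J c (node J i) = c i"
proof (cases "i = 0")
  case True
  assume J: "J > 0"
  then have "nodal_interp J c (node J 0) = elem_interp J c 1 (node J 0)"
    using element_ends[OF J, of 1] by (intro nodal_interp_on_element) auto
  then show ?thesis using True elem_interp_left[of J c 1] by simp
next
  case False
  assume J: "J > 0" and "i \<le> J"
  then have "nodal_interp J c (node J i) = elem_interp J c i (node J i)"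
    using False element_ends[OF J, of i] by (intro nodal_interp_on_element) auto
  then show ?thesis using False J by (simp add: elem_interp_right)
qed

lemma nodal_interp_in_Vh:
  assumes J: "J > 0" and per: "per \<longrightarrow> c J = c 0"
  shows "nodal_interp J c \<in> Vh per J"
  unfolding Vh_def
proof (intro CollectI conjI ballI impI)
  show "continuous_on {0..1} (nodal_interp J c)"
    unfolding nodal_interp_def hat_fun_def by (intro continuous_intros)
  show "\<exists>a b. \<forall>x\<in>{node J (j - 1)..node J j}. nodal_interp J c x = a + x *\<^sub>R b" if j: "j \<in> {1..J}" for j
    using nodal_interp_on_element[OF J j]
    by (intro exI[of _ "c (j - 1) - (node J (j - 1) * real J) *\<^sub>R (c j - c (j - 1))"]
        exI[of _ "real J *\<^sub>R (c j - c (j - 1))"])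
      (auto simp: element_def elem_interp_def elem_coord_def algebra_simps)
  show "nodal_interp J c 0 = nodal_interp J c 1" if per
    using nodal_interp_node[OF J, of 0 c] nodal_interp_node[OF J, of J c] per J that by simp
qed

lemma Vh_add:
  assumes "f \<in> Vh per J" "g \<in> Vh per J"
  shows "(\<lambda>r. f r + g r) \<in> Vh per J"
  unfolding Vh_def
proof (intro CollectI conjI ballI impI)
  show "continuous_on {0..1} (\<lambda>r. f r + g r)"
    using assms by (intro continuous_intros) (auto simp: Vh_def)
  fix j assume j: "j \<in> {1..J}"
  from assms(1) j obtain a b where "\<forall>x\<in>{node J (j - 1)..node J j}. f x = a + x *\<^sub>R b"
    unfolding Vh_def by blast
  moreover from assms(2) j obtain a' b' where "\<forall>x\<in>{node J (j - 1)..node J j}. g x = a' + x *\<^sub>R b'"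
    unfolding Vh_def by blast
  ultimately show "\<exists>a b. \<forall>x\<in>{node J (j - 1)..node J j}. f x + g x = a + x *\<^sub>R b"
    by (intro exI[of _ "a + a'"] exI[of _ "b + b'"]) (simp add: scaleR_add_right)
next
  assume per
  then show "f 0 + g 0 = f 1 + g 1" using assms by (auto simp: Vh_def)
qed

lemma exact_ip_split:
  assumes J: "J > 0"
    and G: "\<And>j. j \<in> {1..J} \<Longrightarrow> continuous_on (element J j) (G j)"
    and FG: "\<And>j t. j \<in> {1..J} \<Longrightarrow> t \<in> {node J (j - 1)<..<node J j} \<Longrightarrow> F t = G j t"
  shows "exact_ip F = (\<Sum>j=1..J. integral (element J j) (G j))"
proof -
  have "(F has_integral (\<Sum>j=1..k. integral (element J j) (G j))) {0..node J k}" if "k \<le> J" for k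
    using that
  proof (induction k)
    case 0
    then show ?case using has_integral_refl(2)[of F 0] by simp
  next
    case (Suc k)
    have j: "Suc k \<in> {1..J}" using Suc by auto
    have gi: "(G (Suc k) has_integral integral (element J (Suc k)) (G (Suc k))) {node J k..node J (Suc k)}"
      using G[OF j] by (simp add: element_def integrable_continuous_real integrable_integral)
    have "(F has_integral integral (element J (Suc k)) (G (Suc k))) {node J k..node J (Suc k)}"
      by (rule has_integral_spike_finite[where S = "{node J k, node J (Suc k)}", OF _ _ gi])
        (use FG[OF j] in auto)
    with Suc.IH Suc.prems show ?case
      using has_integral_combine[of 0 "node J k" "node J (Suc k)" F] node_mono[of 0 k J] node_mono[of k "Suc k" J]
      by simp
  qed
  from this[of J] J show ?thesis unfolding exact_ip_def by (simp add: integral_unique)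
qed

lemma one_sided_limits_element:
  assumes J: "J > 0" and j: "j \<in> {1..J}"
    and G: "continuous_on (element J j) G"
    and FG: "\<And>t. t \<in> {node J (j - 1)<..<node J j} \<Longrightarrow> F t = G t"
  shows "Lim (at_left (node J j)) F = G (node J j)"
    and "Lim (at_right (node J (j - 1))) F = G (node J (j - 1))"
proof -
  have lt: "node J (j - 1) < node J j" using node_less[OF J] j by auto
  have "(G \<longlongrightarrow> G (node J j)) (at (node J j) within element J j)"
    "(G \<longlongrightarrow> G (node J (j - 1))) (at (node J (j - 1)) within element J j)"
    using G element_ends[OF J] j unfolding continuous_on_def by auto
  then have "(G \<longlongrightarrow> G (node J j)) (at_left (node J j))"
    "(G \<longlongrightarrow> G (node J (j - 1))) (at_right (node J (j - 1)))"
    using lt by (simp_all add: element_def at_within_Icc_at_left at_within_Icc_at_right)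
  moreover have "eventually (\<lambda>t. G t = F t) (at_left (node J j))"
    "eventually (\<lambda>t. G t = F t) (at_right (node J (j - 1)))"
    unfolding eventually_at_left_field eventually_at_right_field using lt FG by auto
  ultimately show "Lim (at_left (node J j)) F = G (node J j)"
    and "Lim (at_right (node J (j - 1))) F = G (node J (j - 1))"
    by (auto intro!: tendsto_Lim elim: Lim_transform_eventually)
qed

lemma lumped_ip_split:
  assumes J: "J > 0"
    and G: "\<And>j. j \<in> {1..J} \<Longrightarrow> continuous_on (element J j) (G j)"
    and FG: "\<And>j t. j \<in> {1..J} \<Longrightarrow> t \<in> {node J (j - 1)<..<node J j} \<Longrightarrow> F t = G j t"
  shows "lumped_ip J F = (\<Sum>j=1..J. (1 / real J) / 2 * (G j (node J j) + G j (node J (j - 1))))"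
  unfolding lumped_ip_def sum_distrib_left
  using one_sided_limits_element[OF J _ G FG] by (intro sum.cong) auto

lemma has_integral_quadratic_elem_coord:
  assumes J: "J > 0" and j: "j \<ge> 1"
  shows "((\<lambda>t. \<alpha> + elem_coord J j t * \<beta> + (elem_coord J j t)\<^sup>2 * \<gamma>)
    has_integral (1 / real J) * (\<alpha> + \<beta> / 2 + \<gamma> / 3)) (element J j)"
proof -
  define q where "q = node J (j - 1)"
  have d: "node J j = q + 1 / real J" using node_diff[OF J j] by (simp add: q_def)
  define F where "F t = \<alpha> * (t - q) + \<beta> * real J * (t - q)\<^sup>2 / 2 + \<gamma> * (real J)\<^sup>2 * (t - q) ^ 3 / 3" for t
  have "(F has_real_derivative (\<alpha> + elem_coord J j t * \<beta> + (elem_coord J j t)\<^sup>2 * \<gamma>)) (at t within S)" for t S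
    unfolding F_def elem_coord_def q_def[symmetric]
    by (rule derivative_eq_intros refl | simp)+ (simp add: power2_eq_square field_simps)
  then have der: "(F has_vector_derivative (\<alpha> + elem_coord J j t * \<beta> + (elem_coord J j t)\<^sup>2 * \<gamma>)) (at t within S)" for t S
    by (simp add: has_real_derivative_iff_has_vector_derivative)
  have "q \<le> node J j" using d J by simp
  then have "((\<lambda>t. \<alpha> + elem_coord J j t * \<beta> + (elem_coord J j t)\<^sup>2 * \<gamma>) has_integral (F (node J j) - F q)) (element J j)"
    unfolding element_def q_def[symmetric] by (intro fundamental_theorem_of_calculus der)
  moreover have "F (node J j) - F q = (1 / real J) * (\<alpha> + \<beta> / 2 + \<gamma> / 3)"
    unfolding d F_def using J by (simp add: power2_eq_square power3_eq_cube field_simps)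
  ultimately show ?thesis by simp
qed

lemma integral_elem_affine:
  assumes "J > 0" "j \<ge> 1"
  shows "integral (element J j) (\<lambda>t. (1 - elem_coord J j t) * \<alpha> + elem_coord J j t * \<beta>) = (1 / real J) * ((\<alpha> + \<beta>) / 2)"
proof -
  have eq: "(\<lambda>t. (1 - elem_coord J j t) * \<alpha> + elem_coord J j t * \<beta>) = (\<lambda>t. \<alpha> + elem_coord J j t * (\<beta> - \<alpha>) + (elem_coord J j t)\<^sup>2 * 0)"
    by (simp add: algebra_simps)
  show ?thesis
    unfolding eq by (subst integral_unique[OF has_integral_quadratic_elem_coord[OF assms]]) (simp add: field_simps)
qed

lemma integral_norm_elem_interp_sq:
  assumes "J > 0" "j \<ge> 1"
  shows "integral (element J j) (\<lambda>t. (norm (elem_interp J c j t))\<^sup>2)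
     = (1 / real J) * (((norm (c (j - 1)))\<^sup>2 + c (j - 1) \<bullet> c j + (norm (c j))\<^sup>2) / 3)"
proof -
  define a where "a = c (j - 1)"
  define b where "b = c j"
  have "(\<lambda>t. (norm (elem_interp J c j t))\<^sup>2) = (\<lambda>t. a \<bullet> a + elem_coord J j t * (2 * (a \<bullet> (b - a))) + (elem_coord J j t)\<^sup>2 * ((b - a) \<bullet> (b - a)))"
    unfolding elem_interp_def a_def[symmetric] b_def[symmetric] power2_norm_eq_inner
    by (simp add: fun_eq_iff inner_add_left inner_add_right power2_eq_square algebra_simps inner_commute)
  then have "integral (element J j) (\<lambda>t. (norm (elem_interp J c j t))\<^sup>2) = (1 / real J) * (a \<bullet> a + (2 * (a \<bullet> (b - a))) / 2 + ((b - a) \<bullet> (b - a)) / 3)"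
    using integral_unique[OF has_integral_quadratic_elem_coord[OF assms]] by simp
  also have "\<dots> = (1 / real J) * (((norm a)\<^sup>2 + a \<bullet> b + (norm b)\<^sup>2) / 3)"
    by (simp add: power2_norm_eq_inner inner_diff_left inner_diff_right inner_commute field_simps)
  finally show ?thesis by (simp add: a_def b_def)
qed

lemma abs_integral_element_le:
  assumes J: "J > 0" and j: "j \<ge> 1" and c: "continuous_on (element J j) g"
    and B: "\<And>t. t \<in> element J j \<Longrightarrow> \<bar>g t\<bar> \<le> B"
  shows "\<bar>integral (element J j) g\<bar> \<le> (1 / real J) * B"
proof -
  have "0 \<le> B" using B[of "node J j"] element_ends[OF J j] by linarith
  then have "norm (integral (cbox (node J (j - 1)) (node J j)) g) \<le> B * Henstock_Kurzweil_Integration.content (cbox (node J (j - 1)) (node J j))"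
    by (rule has_integral_bound[of B]) (use element_ends[OF J j] integrable_element[OF c] B in \<open>auto simp: element_def\<close>)
  then show ?thesis using content_element[OF J j] by (simp add: element_def mult.commute)
qed

section \<open>The discrete form\<close>

text \<open>\<open>disc_form lump J Xn dt P1 P2 rh c e\<close> is the second equation (left minus right-hand side)
  with \<open>\<kappa> = \<delta>X / \<Delta>t\<close> substituted, where \<open>X\<close>, \<open>\<delta>X\<close> and \<open>\<eta>\<close> interpolate the nodal values \<open>Xn\<close>,
  \<open>c\<close> and \<open>e\<close>; in the lumped variant the mass term is the trapezoidal rule on each element.\<close>

definition mass_integrand ::
    "nat \<Rightarrow> (nat \<Rightarrow> real \<times> real) \<Rightarrow> real \<Rightarrow> (nat \<Rightarrow> real \<times> real) \<Rightarrow> (nat \<Rightarrow> real \<times> real) \<Rightarrow> nat \<Rightarrow> real \<Rightarrow> real" where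
  "mass_integrand J Xn dt c e j t =
     ((elem_interp J Xn j t \<bullet> e1) *\<^sub>R ((1 / dt) *\<^sub>R elem_interp J c j t)) \<bullet> (norm (elem_slope J Xn j) *\<^sub>R elem_interp J e j t)"

definition length_integrand ::
    "nat \<Rightarrow> (nat \<Rightarrow> real \<times> real) \<Rightarrow> (nat \<Rightarrow> real \<times> real) \<Rightarrow> (nat \<Rightarrow> real \<times> real) \<Rightarrow> nat \<Rightarrow> real \<Rightarrow> real" where
  "length_integrand J Xn c e j t = (elem_interp J e j t \<bullet> e1) * norm (elem_slope J (\<lambda>i. Xn i + c i) j)"

definition stiffness_integrand ::
    "nat \<Rightarrow> (nat \<Rightarrow> real \<times> real) \<Rightarrow> (nat \<Rightarrow> real \<times> real) \<Rightarrow> (nat \<Rightarrow> real \<times> real) \<Rightarrow> nat \<Rightarrow> real \<Rightarrow> real" where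
  "stiffness_integrand J Xn c e j t =
     ((elem_interp J Xn j t \<bullet> e1) *\<^sub>R elem_slope J (\<lambda>i. Xn i + c i) j) \<bullet> (inverse (norm (elem_slope J Xn j)) *\<^sub>R elem_slope J e j)"

definition elem_mass ::
    "bool \<Rightarrow> nat \<Rightarrow> (nat \<Rightarrow> real \<times> real) \<Rightarrow> real \<Rightarrow> (nat \<Rightarrow> real \<times> real) \<Rightarrow> (nat \<Rightarrow> real \<times> real) \<Rightarrow> nat \<Rightarrow> real" where
  "elem_mass lump J Xn dt c e j =
     (if lump then (1 / real J) / 2 * (mass_integrand J Xn dt c e j (node J j) + mass_integrand J Xn dt c e j (node J (j - 1)))
      else integral (element J j) (mass_integrand J Xn dt c e j))"

definition elem_form ::
    "bool \<Rightarrow> nat \<Rightarrow> (nat \<Rightarrow> real \<times> real) \<Rightarrow> real \<Rightarrow> (nat \<Rightarrow> real \<times> real) \<Rightarrow> (nat \<Rightarrow> real \<times> real) \<Rightarrow> nat \<Rightarrow> real" where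
  "elem_form lump J Xn dt c e j = elem_mass lump J Xn dt c e j
     + integral (element J j) (length_integrand J Xn c e j) + integral (element J j) (stiffness_integrand J Xn c e j)"

definition end_value :: "nat \<Rightarrow> (nat \<Rightarrow> real \<times> real) \<Rightarrow> real \<Rightarrow> real \<times> real" where
  "end_value J c p = (if p = 0 then c 0 else c J)"

definition bdry_form ::
    "nat \<Rightarrow> (nat \<Rightarrow> real \<times> real) \<Rightarrow> real set \<Rightarrow> real set \<Rightarrow> (real \<Rightarrow> real) \<Rightarrow> (nat \<Rightarrow> real \<times> real) \<Rightarrow> (nat \<Rightarrow> real \<times> real) \<Rightarrow> real" where
  "bdry_form J Xn P1 P2 rh c e = (\<Sum>p\<in>P1. rh p * (end_value J Xn p \<bullet> e1) * (end_value J e p \<bullet> e2))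
    + (\<Sum>p\<in>P2. ((posp (rh p) *\<^sub>R (end_value J Xn p + end_value J c p) + negp (rh p) *\<^sub>R end_value J Xn p) \<bullet> e1)
               * (end_value J e p \<bullet> e1))"

definition disc_form ::
    "bool \<Rightarrow> nat \<Rightarrow> (nat \<Rightarrow> real \<times> real) \<Rightarrow> real \<Rightarrow> real set \<Rightarrow> real set \<Rightarrow> (real \<Rightarrow> real)
      \<Rightarrow> (nat \<Rightarrow> real \<times> real) \<Rightarrow> (nat \<Rightarrow> real \<times> real) \<Rightarrow> real" where
  "disc_form lump J Xn dt P1 P2 rh c e = (\<Sum>j=1..J. elem_form lump J Xn dt c e j) + bdry_form J Xn P1 P2 rh c e"

lemma continuous_on_integrands:
  "continuous_on S (mass_integrand J Xn dt c e j)"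
  "continuous_on S (length_integrand J Xn c e j)"
  "continuous_on S (stiffness_integrand J Xn c e j)"
  unfolding mass_integrand_def length_integrand_def stiffness_integrand_def
  by (intro continuous_intros continuous_on_elem_interp)+

lemma integral_element_add:
  "continuous_on (element J j) f \<Longrightarrow> continuous_on (element J j) g \<Longrightarrow>
    integral (element J j) (\<lambda>t. f t + g t) = integral (element J j) f + integral (element J j) g"
  for f g :: "real \<Rightarrow> real"
  by (rule integral_add) (auto intro: integrable_element)

lemma integral_element_diff:
  "continuous_on (element J j) f \<Longrightarrow> continuous_on (element J j) g \<Longrightarrow>
    integral (element J j) (\<lambda>t. f t - g t) = integral (element J j) f - integral (element J j) g"
  for f g :: "real \<Rightarrow> real"
  by (rule integral_diff) (auto intro: integrable_element)

lemma end_value_add: "end_value J (\<lambda>i. a i + b i) p = end_value J a p + end_value J b p"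
  by (simp add: end_value_def)

lemma end_value_scale: "end_value J (\<lambda>i. r *\<^sub>R a i) p = r *\<^sub>R end_value J a p"
  by (simp add: end_value_def)

lemma disc_form_add:
  "disc_form lump J Xn dt P1 P2 rh c (\<lambda>i. e i + e' i)
     = disc_form lump J Xn dt P1 P2 rh c e + disc_form lump J Xn dt P1 P2 rh c e'"
proof -
  have "mass_integrand J Xn dt c (\<lambda>i. e i + e' i) j = (\<lambda>t. mass_integrand J Xn dt c e j t + mass_integrand J Xn dt c e' j t)"
    "length_integrand J Xn c (\<lambda>i. e i + e' i) j = (\<lambda>t. length_integrand J Xn c e j t + length_integrand J Xn c e' j t)"
    "stiffness_integrand J Xn c (\<lambda>i. e i + e' i) j = (\<lambda>t. stiffness_integrand J Xn c e j t + stiffness_integrand J Xn c e' j t)"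
    for j
    unfolding mass_integrand_def length_integrand_def stiffness_integrand_def elem_interp_add elem_slope_add
    by (simp_all add: fun_eq_iff scaleR_add_right inner_add_left inner_add_right distrib_right)
  then have "elem_form lump J Xn dt c (\<lambda>i. e i + e' i) j = elem_form lump J Xn dt c e j + elem_form lump J Xn dt c e' j" for j
    unfolding elem_form_def elem_mass_def
    by (simp add: integral_element_add continuous_on_integrands algebra_simps)
  then show ?thesis
    unfolding disc_form_def bdry_form_def end_value_add
    by (simp add: sum.distrib inner_add_left algebra_simps)
qed

lemma disc_form_scale:
  "disc_form lump J Xn dt P1 P2 rh c (\<lambda>i. a *\<^sub>R e i) = a * disc_form lump J Xn dt P1 P2 rh c e"
proof -
  have "mass_integrand J Xn dt c (\<lambda>i. a *\<^sub>R e i) j = (\<lambda>t. a * mass_integrand J Xn dt c e j t)"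
    "length_integrand J Xn c (\<lambda>i. a *\<^sub>R e i) j = (\<lambda>t. a * length_integrand J Xn c e j t)"
    "stiffness_integrand J Xn c (\<lambda>i. a *\<^sub>R e i) j = (\<lambda>t. a * stiffness_integrand J Xn c e j t)"
    for j
    unfolding mass_integrand_def length_integrand_def stiffness_integrand_def elem_interp_scale elem_slope_scale
    by (simp_all add: fun_eq_iff algebra_simps)
  then have "elem_form lump J Xn dt c (\<lambda>i. a *\<^sub>R e i) j = a * elem_form lump J Xn dt c e j" for j
    unfolding elem_form_def elem_mass_def by (simp add: algebra_simps)
  then show ?thesis
    unfolding disc_form_def bdry_form_def end_value_scale
    by (simp add: sum_distrib_left algebra_simps)
qed

lemma disc_form_cong:
  assumes "\<And>i. i \<le> J \<Longrightarrow> e i = e' i"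
  shows "disc_form lump J Xn dt P1 P2 rh c e = disc_form lump J Xn dt P1 P2 rh c e'"
proof -
  have "elem_interp J e j = elem_interp J e' j" "elem_slope J e j = elem_slope J e' j" if "j \<in> {1..J}" for j
  proof -
    have "e (j - 1) = e' (j - 1)" "e j = e' j" using that assms by auto
    then show "elem_interp J e j = elem_interp J e' j" "elem_slope J e j = elem_slope J e' j"
      by (simp_all add: elem_interp_def elem_slope_def fun_eq_iff)
  qed
  then have "mass_integrand J Xn dt c e j = mass_integrand J Xn dt c e' j
      \<and> length_integrand J Xn c e j = length_integrand J Xn c e' j
      \<and> stiffness_integrand J Xn c e j = stiffness_integrand J Xn c e' j" if "j \<in> {1..J}" for j
    using that by (simp add: fun_eq_iff mass_integrand_def length_integrand_def stiffness_integrand_def)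
  then have "elem_form lump J Xn dt c e j = elem_form lump J Xn dt c e' j" if "j \<in> {1..J}" for j
    using that by (simp add: elem_form_def elem_mass_def)
  moreover have "end_value J e p = end_value J e' p" for p
    using assms by (simp add: end_value_def)
  ultimately show ?thesis
    unfolding disc_form_def bdry_form_def by (metis (no_types, lifting) sum.cong)
qed

lemma Vh_forms_eq_disc_form:
  assumes J: "J > 0" and X: "X \<in> Vh per J" and cper: "per \<longrightarrow> c J = c 0"
    and eta: "eta \<in> Vh per J" and P: "P1 \<subseteq> {0, 1}" "P2 \<subseteq> {0, 1}"
  defines "X1 \<equiv> \<lambda>r. X r + nodal_interp J c r"
  shows "sharp_ip lump J (\<lambda>r. ((X r \<bullet> e1) *\<^sub>R ((1 / dt) *\<^sub>R (X1 r - X r))) \<bullet> (norm (drho X r) *\<^sub>R eta r))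
     + exact_ip (\<lambda>r. (eta r \<bullet> e1) * norm (drho X1 r))
     + exact_ip (\<lambda>r. ((X r \<bullet> e1) *\<^sub>R drho X1 r) \<bullet> (inverse (norm (drho X r)) *\<^sub>R drho eta r))
     + (\<Sum>p\<in>P1. rh p * (X p \<bullet> e1) * (eta p \<bullet> e2))
     + (\<Sum>p\<in>P2. ((posp (rh p) *\<^sub>R X1 p + negp (rh p) *\<^sub>R X p) \<bullet> e1) * (eta p \<bullet> e1))
   = disc_form lump J (nodal J X) dt P1 P2 rh c (nodal J eta)"
proof -
  define Xn where "Xn = nodal J X"
  define en where "en = nodal J eta"
  have X1V: "X1 \<in> Vh per J"
    unfolding X1_def by (rule Vh_add[OF X nodal_interp_in_Vh[OF J cper]])
  have slope_X1: "elem_slope J (nodal J X1) j = elem_slope J (\<lambda>i. Xn i + c i) j" if "j \<in> {1..J}" for j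
  proof -
    have "nodal_interp J c (node J (j - 1)) = c (j - 1)" "nodal_interp J c (node J j) = c j"
      using that by (auto intro: nodal_interp_node[OF J])
    then show ?thesis by (simp add: elem_slope_def nodal_def X1_def Xn_def)
  qed
  have on_element: "X t = elem_interp J Xn j t \<and> nodal_interp J c t = elem_interp J c j t
      \<and> eta t = elem_interp J en j t \<and> drho X t = elem_slope J Xn j
      \<and> drho X1 t = elem_slope J (\<lambda>i. Xn i + c i) j \<and> drho eta t = elem_slope J en j"
    if j: "j \<in> {1..J}" and t: "t \<in> {node J (j - 1)<..<node J j}" for j t
  proof -
    have "t \<in> element J j" using t by (simp add: element_def)
    then show ?thesis
      using Vh_eq_elem_interp[OF X J j] nodal_interp_on_element[OF J j] Vh_eq_elem_interp[OF eta J j]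
        drho_Vh[OF X J j t] drho_Vh[OF X1V J j t] drho_Vh[OF eta J j t] slope_X1[OF j]
      by (simp add: Xn_def en_def)
  qed
  have mass: "sharp_ip lump J (\<lambda>r. ((X r \<bullet> e1) *\<^sub>R ((1 / dt) *\<^sub>R (X1 r - X r))) \<bullet> (norm (drho X r) *\<^sub>R eta r))
     = (\<Sum>j=1..J. elem_mass lump J Xn dt c en j)"
  proof -
    have integrand: "((X t \<bullet> e1) *\<^sub>R ((1 / dt) *\<^sub>R (X1 t - X t))) \<bullet> (norm (drho X t) *\<^sub>R eta t)
        = mass_integrand J Xn dt c en j t"
      if "j \<in> {1..J}" "t \<in> {node J (j - 1)<..<node J j}" for j t
      using on_element[OF that] by (simp add: mass_integrand_def X1_def)
    show ?thesis
      using lumped_ip_split[OF J continuous_on_integrands(1) integrand]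
        exact_ip_split[OF J continuous_on_integrands(1) integrand]
      unfolding sharp_ip_def elem_mass_def by simp
  qed
  have length: "exact_ip (\<lambda>r. (eta r \<bullet> e1) * norm (drho X1 r)) = (\<Sum>j=1..J. integral (element J j) (length_integrand J Xn c en j))"
    using on_element by (intro exact_ip_split[OF J continuous_on_integrands(2)]) (simp add: length_integrand_def)
  have stiffness: "exact_ip (\<lambda>r. ((X r \<bullet> e1) *\<^sub>R drho X1 r) \<bullet> (inverse (norm (drho X r)) *\<^sub>R drho eta r))
      = (\<Sum>j=1..J. integral (element J j) (stiffness_integrand J Xn c en j))"
    using on_element by (intro exact_ip_split[OF J continuous_on_integrands(3)]) (simp add: stiffness_integrand_def)
  have "X p = end_value J Xn p" "nodal_interp J c p = end_value J c p" "eta p = end_value J en p"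
    if "p \<in> {0, 1}" for p
    using that J nodal_interp_node[OF J, of 0 c] nodal_interp_node[OF J, of J c]
    by (auto simp: end_value_def nodal_def Xn_def en_def)
  then have boundary: "(\<Sum>p\<in>P1. rh p * (X p \<bullet> e1) * (eta p \<bullet> e2))
     + (\<Sum>p\<in>P2. ((posp (rh p) *\<^sub>R X1 p + negp (rh p) *\<^sub>R X p) \<bullet> e1) * (eta p \<bullet> e1))
     = bdry_form J Xn P1 P2 rh c en"
    unfolding bdry_form_def X1_def using P by (intro arg_cong2[where f="(+)"] sum.cong) auto
  show ?thesis
    unfolding disc_form_def elem_form_def sum.distrib mass length stiffness boundary[symmetric]
      Xn_def[symmetric] en_def[symmetric]
    by simp
qed

section \<open>Strong monotonicity and Lipschitz continuity\<close>

lemma mass_integrand_diff: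
  "mass_integrand J Xn dt c e j t - mass_integrand J Xn dt c' e j t
     = (elem_interp J Xn j t \<bullet> e1) * norm (elem_slope J Xn j) / dt * (elem_interp J (\<lambda>i. c i - c' i) j t \<bullet> elem_interp J e j t)"
  unfolding mass_integrand_def elem_interp_diff
  by (simp add: inner_diff_left algebra_simps)

lemma length_integrand_diff:
  "length_integrand J Xn c e j t - length_integrand J Xn c' e j t
     = (elem_interp J e j t \<bullet> e1) * (norm (elem_slope J (\<lambda>i. Xn i + c i) j) - norm (elem_slope J (\<lambda>i. Xn i + c' i) j))"
  unfolding length_integrand_def by (simp add: algebra_simps)

lemma stiffness_integrand_diff:
  "stiffness_integrand J Xn c e j t - stiffness_integrand J Xn c' e j t
     = (elem_interp J Xn j t \<bullet> e1) / norm (elem_slope J Xn j) * (elem_slope J (\<lambda>i. c i - c' i) j \<bullet> elem_slope J e j)"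
  unfolding stiffness_integrand_def elem_slope_def
  by (simp add: inner_diff_left scaleR_diff_right inner_diff_right algebra_simps divide_inverse)

lemma norm_slope_shift_diff_le:
  "\<bar>norm (elem_slope J (\<lambda>i. Xn i + c i) j) - norm (elem_slope J (\<lambda>i. Xn i + c' i) j)\<bar>
     \<le> norm (elem_slope J (\<lambda>i. c i - c' i) j)"
proof -
  have "elem_slope J (\<lambda>i. Xn i + c i) j - elem_slope J (\<lambda>i. Xn i + c' i) j = elem_slope J (\<lambda>i. c i - c' i) j"
    by (simp add: elem_slope_def algebra_simps)
  then show ?thesis by (metis norm_triangle_ineq3)
qed

lemma abs_inner_e1_le: "\<bar>v \<bullet> e1\<bar> \<le> norm v"
  using Cauchy_Schwarz_ineq2[of v e1] by (simp add: e1_def)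

text \<open>Young's inequality with weight \<open>sqrt dt\<close>; the restriction \<open>dt < 4 m\<^sup>2\<close> keeps the
  resulting coercivity factor positive.\<close>
lemma young_time_step:
  fixes x L dt m \<alpha> s :: real
  assumes m: "m > 0" and x: "x \<ge> m" and L: "L > 0" and dt: "dt > 0" and dt4: "dt < 4 * m\<^sup>2"
    and \<alpha>: "\<alpha> \<ge> 0" and s: "s \<ge> 0"
  shows "(1 - sqrt dt / (2 * m)) * (m * L / dt) * \<alpha>\<^sup>2 \<le> x * L / dt * \<alpha>\<^sup>2 + x / L * s\<^sup>2 - \<alpha> * s"
proof -
  define \<sigma> where "\<sigma> = sqrt dt"
  define \<theta> where "\<theta> = \<sigma> / (2 * m)"
  have \<sigma>: "\<sigma> > 0" "dt = \<sigma>\<^sup>2" using dt by (simp_all add: \<sigma>_def)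
  have \<theta>: "0 \<le> \<theta>" "\<theta> < 1"
  proof -
    have "\<sigma> < sqrt (4 * m\<^sup>2)" using dt4 by (simp add: \<sigma>_def)
    also have "\<dots> = 2 * m" using m by (simp add: real_sqrt_mult)
    finally show "\<theta> < 1" using m by (simp add: \<theta>_def)
  qed (use \<sigma> m in \<open>simp add: \<theta>_def\<close>)
  have "2 * L * \<alpha> * \<sigma> * s \<le> L\<^sup>2 * \<alpha>\<^sup>2 + \<sigma>\<^sup>2 * s\<^sup>2"
    using sum_squares_ge_zero[of 0 "L * \<alpha> - \<sigma> * s"] by (simp add: power2_eq_square algebra_simps)
  then have "m * (2 * L * \<alpha> * \<sigma> * s) \<le> m * (L\<^sup>2 * \<alpha>\<^sup>2 + \<sigma>\<^sup>2 * s\<^sup>2)"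
    using m by (intro mult_left_mono) auto
  then have "2 * m * (\<alpha> * s) \<le> \<sigma> * (m * L / dt * \<alpha>\<^sup>2) + \<sigma> * (m / L * s\<^sup>2)"
    using \<sigma> L m by (simp add: field_simps power2_eq_square)
  then have "\<alpha> * s \<le> (\<sigma> * (m * L / dt * \<alpha>\<^sup>2) + \<sigma> * (m / L * s\<^sup>2)) / (2 * m)"
    using m by (simp add: pos_le_divide_eq mult.commute)
  also have "\<dots> = \<theta> * (m * L / dt * \<alpha>\<^sup>2) + \<theta> * (m / L * s\<^sup>2)"
    by (simp add: \<theta>_def add_divide_distrib)
  also have "\<dots> \<le> \<theta> * (x * L / dt * \<alpha>\<^sup>2) + x / L * s\<^sup>2"
  proof (intro add_mono mult_left_mono)
    have "\<theta> * (m / L * s\<^sup>2) \<le> m / L * s\<^sup>2"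
      using \<theta> m L by (intro mult_left_le_one_le) auto
    also have "\<dots> \<le> x / L * s\<^sup>2"
      using x L by (intro mult_right_mono divide_right_mono) auto
    finally show "\<theta> * (m / L * s\<^sup>2) \<le> x / L * s\<^sup>2" .
  qed (use \<theta> x L dt in \<open>auto intro!: divide_right_mono mult_right_mono\<close>)
  finally have "(1 - \<theta>) * (x * L / dt * \<alpha>\<^sup>2) \<le> x * L / dt * \<alpha>\<^sup>2 + x / L * s\<^sup>2 - \<alpha> * s"
    unfolding left_diff_distrib by simp
  moreover have "(1 - \<theta>) * (m * L / dt) * \<alpha>\<^sup>2 \<le> (1 - \<theta>) * (x * L / dt * \<alpha>\<^sup>2)"
    using \<theta> x L dt by (auto simp: mult.assoc intro!: mult_left_mono divide_right_mono mult_right_mono)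
  ultimately show ?thesis by (simp add: \<theta>_def \<sigma>_def)
qed

lemma elem_form_diff:
  "elem_form lump J Xn dt c e j - elem_form lump J Xn dt c' e j
   = (if lump then (1 / real J) / 2 * ((mass_integrand J Xn dt c e j (node J j) - mass_integrand J Xn dt c' e j (node J j))
                  + (mass_integrand J Xn dt c e j (node J (j - 1)) - mass_integrand J Xn dt c' e j (node J (j - 1))))
      else integral (element J j) (\<lambda>t. mass_integrand J Xn dt c e j t - mass_integrand J Xn dt c' e j t))
     + integral (element J j) (\<lambda>t. length_integrand J Xn c e j t - length_integrand J Xn c' e j t)
     + integral (element J j) (\<lambda>t. stiffness_integrand J Xn c e j t - stiffness_integrand J Xn c' e j t)"
  unfolding elem_form_def elem_mass_def
  by (simp add: integral_element_diff continuous_on_integrands algebra_simps)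

lemma elem_interp_e1:
  "elem_interp J c j t \<bullet> e1 = (1 - elem_coord J j t) * (c (j - 1) \<bullet> e1) + elem_coord J j t * (c j \<bullet> e1)"
  by (simp add: elem_interp_convex inner_add_left)

lemma mass_integrand_diff_self:
  "D = (\<lambda>i. c i - c' i) \<Longrightarrow> mass_integrand J Xn dt c D j t - mass_integrand J Xn dt c' D j t
     = (elem_interp J Xn j t \<bullet> e1) * norm (elem_slope J Xn j) / dt * (norm (elem_interp J D j t))\<^sup>2"
  by (simp add: mass_integrand_diff power2_norm_eq_inner)

lemma length_integrand_diff_self_ge:
  assumes "D = (\<lambda>i. c i - c' i)"
  shows "- (norm (elem_interp J D j t) * norm (elem_slope J D j))
     \<le> length_integrand J Xn c D j t - length_integrand J Xn c' D j t"
proof -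
  have "\<bar>length_integrand J Xn c D j t - length_integrand J Xn c' D j t\<bar>
      \<le> norm (elem_interp J D j t) * norm (elem_slope J D j)"
    unfolding length_integrand_diff abs_mult assms
    by (intro mult_mono abs_inner_e1_le norm_slope_shift_diff_le) auto
  then show ?thesis by linarith
qed

lemma stiffness_integrand_diff_self:
  "D = (\<lambda>i. c i - c' i) \<Longrightarrow> stiffness_integrand J Xn c D j t - stiffness_integrand J Xn c' D j t
     = (elem_interp J Xn j t \<bullet> e1) / norm (elem_slope J Xn j) * (norm (elem_slope J D j))\<^sup>2"
  by (simp add: stiffness_integrand_diff power2_norm_eq_inner)

lemma integral_length_diff_self_ge:
  fixes c c' :: "nat \<Rightarrow> real \<times> real"
  assumes J: "J > 0" and j: "j \<ge> 1"
    and D: "D = (\<lambda>i. c i - c' i)"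
  shows "- norm (elem_slope J D j) * ((1 / real J) * ((norm (D (j - 1)) + norm (D j)) / 2))
    \<le> integral (element J j) (\<lambda>t. length_integrand J Xn c D j t - length_integrand J Xn c' D j t)"
proof -
  define s where "s = norm (elem_slope J D j)"
  have "integral (element J j) (\<lambda>t. - s * ((1 - elem_coord J j t) * norm (D (j - 1)) + elem_coord J j t * norm (D j)))
      \<le> integral (element J j) (\<lambda>t. length_integrand J Xn c D j t - length_integrand J Xn c' D j t)"
  proof (rule integral_le)
    fix t assume t: "t \<in> element J j"
    have "norm (elem_interp J D j t) * s \<le> ((1 - elem_coord J j t) * norm (D (j - 1)) + elem_coord J j t * norm (D j)) * s"
      using norm_elem_interp_le[OF J j t] by (intro mult_right_mono) (auto simp: s_def)
    then show "- s * ((1 - elem_coord J j t) * norm (D (j - 1)) + elem_coord J j t * norm (D j))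
        \<le> length_integrand J Xn c D j t - length_integrand J Xn c' D j t"
      using length_integrand_diff_self_ge[OF D, of J j t Xn] by (simp add: s_def algebra_simps)
  qed (auto intro!: integrable_element continuous_intros continuous_on_integrands simp: elem_coord_def)
  then show ?thesis
    using integral_elem_affine[OF J j, of "norm (D (j - 1))" "norm (D j)"] by (simp add: s_def)
qed

lemma integral_stiffness_diff_self:
  fixes c c' :: "nat \<Rightarrow> real \<times> real"
  assumes J: "J > 0" and j: "j \<ge> 1"
    and D: "D = (\<lambda>i. c i - c' i)"
  shows "integral (element J j) (\<lambda>t. stiffness_integrand J Xn c D j t - stiffness_integrand J Xn c' D j t)
    = (norm (elem_slope J D j))\<^sup>2 / norm (elem_slope J Xn j) * ((1 / real J) * ((Xn (j - 1) \<bullet> e1 + Xn j \<bullet> e1) / 2))"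
proof -
  have "(\<lambda>t. stiffness_integrand J Xn c D j t - stiffness_integrand J Xn c' D j t)
      = (\<lambda>t. (norm (elem_slope J D j))\<^sup>2 / norm (elem_slope J Xn j)
             * ((1 - elem_coord J j t) * (Xn (j - 1) \<bullet> e1) + elem_coord J j t * (Xn j \<bullet> e1)))"
    by (simp add: fun_eq_iff stiffness_integrand_diff_self[OF D] elem_interp_e1)
  then show ?thesis
    using integral_elem_affine[OF J j, of "Xn (j - 1) \<bullet> e1" "Xn j \<bullet> e1"] by simp
qed

lemma elem_form_monotone_lumped:
  fixes c c' :: "nat \<Rightarrow> real \<times> real"
  assumes J: "J > 0" and j: "j \<ge> 1" and m: "m > 0" and dt: "dt > 0" and dt4: "dt < 4 * m\<^sup>2"
    and e1_lower: "\<And>t. t \<in> element J j \<Longrightarrow> m \<le> elem_interp J Xn j t \<bullet> e1"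
    and L: "norm (elem_slope J Xn j) > 0" and D: "D = (\<lambda>i. c i - c' i)"
  defines "\<kappa> \<equiv> (1 - sqrt dt / (2 * m)) * (m * norm (elem_slope J Xn j) / dt)"
  shows "(1 / real J) / 2 * (\<kappa> * (norm (D (j - 1)))\<^sup>2 + \<kappa> * (norm (D j))\<^sup>2)
     \<le> elem_form True J Xn dt c D j - elem_form True J Xn dt c' D j"
proof -
  define L where "L = norm (elem_slope J Xn j)"
  define s where "s = norm (elem_slope J D j)"
  define xa where "xa = Xn (j - 1) \<bullet> e1"
  define xb where "xb = Xn j \<bullet> e1"
  define I\<^sub>l where "I\<^sub>l = integral (element J j) (\<lambda>t. length_integrand J Xn c D j t - length_integrand J Xn c' D j t)"
  define I\<^sub>s where "I\<^sub>s = integral (element J j) (\<lambda>t. stiffness_integrand J Xn c D j t - stiffness_integrand J Xn c' D j t)"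
  have "m \<le> elem_interp J Xn j (node J (j - 1)) \<bullet> e1" "m \<le> elem_interp J Xn j (node J j) \<bullet> e1"
    using e1_lower element_ends[OF J j] by auto
  then have ends: "m \<le> xa" "m \<le> xb"
    using elem_interp_left[of J Xn j] elem_interp_right[OF J j, of Xn] by (simp_all add: xa_def xb_def)
  have "elem_form True J Xn dt c D j - elem_form True J Xn dt c' D j
      = (1 / real J) / 2 * (xb * L / dt * (norm (D j))\<^sup>2 + xa * L / dt * (norm (D (j - 1)))\<^sup>2) + I\<^sub>l + I\<^sub>s"
    using elem_interp_left[of J D j] elem_interp_right[OF J j, of D] elem_interp_left[of J Xn j]
      elem_interp_right[OF J j, of Xn]
    unfolding elem_form_diff I\<^sub>l_def I\<^sub>s_def mass_integrand_diff_self[OF D]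
    by (simp add: L_def xa_def xb_def)
  moreover have "- s * ((1 / real J) * ((norm (D (j - 1)) + norm (D j)) / 2)) \<le> I\<^sub>l"
    using integral_length_diff_self_ge[OF J j D, of Xn] by (simp add: s_def I\<^sub>l_def)
  moreover have "I\<^sub>s = s\<^sup>2 / L * ((1 / real J) * ((xa + xb) / 2))"
    using integral_stiffness_diff_self[OF J j D, of Xn] by (simp add: s_def I\<^sub>s_def L_def xa_def xb_def)
  ultimately have "(1 / real J) / 2 * ((xa * L / dt * (norm (D (j - 1)))\<^sup>2 + xa / L * s\<^sup>2 - norm (D (j - 1)) * s)
      + (xb * L / dt * (norm (D j))\<^sup>2 + xb / L * s\<^sup>2 - norm (D j) * s))
      \<le> elem_form True J Xn dt c D j - elem_form True J Xn dt c' D j"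
    by (simp add: algebra_simps add_divide_distrib)
  moreover have "\<kappa> * (norm (D (j - 1)))\<^sup>2 \<le> xa * L / dt * (norm (D (j - 1)))\<^sup>2 + xa / L * s\<^sup>2 - norm (D (j - 1)) * s"
    "\<kappa> * (norm (D j))\<^sup>2 \<le> xb * L / dt * (norm (D j))\<^sup>2 + xb / L * s\<^sup>2 - norm (D j) * s"
    unfolding \<kappa>_def L_def[symmetric]
    by (rule young_time_step[OF m ends(1) _ dt dt4] young_time_step[OF m ends(2) _ dt dt4];
        use L in \<open>simp add: L_def s_def\<close>)+
  ultimately show ?thesis
    using J by (smt (verit) mult_left_mono divide_nonneg_nonneg of_nat_0_le_iff)
qed

lemma elem_form_monotone_exact:
  fixes c c' :: "nat \<Rightarrow> real \<times> real"
  assumes J: "J > 0" and j: "j \<ge> 1" and m: "m > 0" and dt: "dt > 0" and dt4: "dt < 4 * m\<^sup>2"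
    and e1_lower: "\<And>t. t \<in> element J j \<Longrightarrow> m \<le> elem_interp J Xn j t \<bullet> e1"
    and L: "norm (elem_slope J Xn j) > 0" and D: "D = (\<lambda>i. c i - c' i)"
  defines "\<kappa> \<equiv> (1 - sqrt dt / (2 * m)) * (m * norm (elem_slope J Xn j) / dt)"
  shows "integral (element J j) (\<lambda>t. \<kappa> * (norm (elem_interp J D j t))\<^sup>2)
     \<le> elem_form False J Xn dt c D j - elem_form False J Xn dt c' D j"
proof -
  define \<Delta> where "\<Delta> t = (mass_integrand J Xn dt c D j t - mass_integrand J Xn dt c' D j t)
    + (length_integrand J Xn c D j t - length_integrand J Xn c' D j t)
    + (stiffness_integrand J Xn c D j t - stiffness_integrand J Xn c' D j t)" for t
  have "elem_form False J Xn dt c D j - elem_form False J Xn dt c' D j = integral (element J j) \<Delta>"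
    unfolding elem_form_diff \<Delta>_def
    by (simp add: integral_element_add continuous_on_integrands continuous_intros)
  moreover have "integral (element J j) (\<lambda>t. \<kappa> * (norm (elem_interp J D j t))\<^sup>2) \<le> integral (element J j) \<Delta>"
  proof (rule integral_le)
    show "\<kappa> * (norm (elem_interp J D j t))\<^sup>2 \<le> \<Delta> t" if "t \<in> element J j" for t
      using young_time_step[OF m e1_lower[OF that] L dt dt4, of "norm (elem_interp J D j t)" "norm (elem_slope J D j)"]
        length_integrand_diff_self_ge[OF D, of J j t Xn]
      by (simp add: \<Delta>_def \<kappa>_def mass_integrand_diff_self[OF D] stiffness_integrand_diff_self[OF D])
  qed (auto intro!: integrable_element continuous_intros continuous_on_integrands continuous_on_elem_interp simp: \<Delta>_def)
  ultimately show ?thesis by simp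
qed

lemma elem_form_strongly_monotone:
  fixes c c' :: "nat \<Rightarrow> real \<times> real"
  assumes J: "J > 0" and j: "j \<ge> 1" and m: "m > 0" and dt: "dt > 0" and dt4: "dt < 4 * m\<^sup>2"
    and e1_lower: "\<And>t. t \<in> element J j \<Longrightarrow> m \<le> elem_interp J Xn j t \<bullet> e1"
    and L: "norm (elem_slope J Xn j) > 0"
  defines "D \<equiv> \<lambda>i. c i - c' i"
  shows "(1 - sqrt dt / (2 * m)) * (m * norm (elem_slope J Xn j) / dt) / (6 * real J) * ((norm (D (j - 1)))\<^sup>2 + (norm (D j))\<^sup>2)
     \<le> elem_form lump J Xn dt c D j - elem_form lump J Xn dt c' D j"
proof -
  define \<kappa> where "\<kappa> = (1 - sqrt dt / (2 * m)) * (m * norm (elem_slope J Xn j) / dt)"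
  define a where "a = D (j - 1)"
  define b where "b = D j"
  have \<kappa>: "\<kappa> \<ge> 0"
  proof -
    have "sqrt dt < sqrt (4 * m\<^sup>2)" using dt4 by simp
    then have "sqrt dt / (2 * m) < 1" using m by (simp add: real_sqrt_mult)
    then show ?thesis using m L dt by (simp add: \<kappa>_def)
  qed
  have "\<kappa> / (6 * real J) * ((norm a)\<^sup>2 + (norm b)\<^sup>2) \<le> elem_form lump J Xn dt c D j - elem_form lump J Xn dt c' D j"
  proof (cases lump)
    case True
    have "\<kappa> / (6 * real J) * ((norm a)\<^sup>2 + (norm b)\<^sup>2) \<le> (1 / real J) / 2 * (\<kappa> * (norm a)\<^sup>2 + \<kappa> * (norm b)\<^sup>2)"
      using \<kappa> J by (simp add: field_simps)
    moreover have "lump = True" using True by simp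
    ultimately show ?thesis
      using elem_form_monotone_lumped[OF J j m dt dt4 e1_lower L D_def[THEN meta_eq_to_obj_eq]]
      unfolding a_def b_def \<kappa>_def by simp
  next
    case False
    have "(norm a)\<^sup>2 + (norm b)\<^sup>2 \<le> 2 * ((norm a)\<^sup>2 + a \<bullet> b + (norm b)\<^sup>2)"
    proof -
      have "0 \<le> (norm (a + b))\<^sup>2" by simp
      then show ?thesis by (simp add: power2_norm_eq_inner inner_add_left inner_add_right inner_commute)
    qed
    then have "\<kappa> / (6 * real J) * ((norm a)\<^sup>2 + (norm b)\<^sup>2)
        \<le> \<kappa> / (6 * real J) * (2 * ((norm a)\<^sup>2 + a \<bullet> b + (norm b)\<^sup>2))"
      using \<kappa> J by (intro mult_left_mono) auto
    also have "\<dots> = \<kappa> * ((1 / real J) * (((norm a)\<^sup>2 + a \<bullet> b + (norm b)\<^sup>2) / 3))"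
      using J by (simp add: field_simps)
    also have "\<dots> = integral (element J j) (\<lambda>t. \<kappa> * (norm (elem_interp J D j t))\<^sup>2)"
      using integral_norm_elem_interp_sq[OF J j, of D] by (simp add: a_def b_def)
    finally have "\<kappa> / (6 * real J) * ((norm a)\<^sup>2 + (norm b)\<^sup>2)
        \<le> integral (element J j) (\<lambda>t. \<kappa> * (norm (elem_interp J D j t))\<^sup>2)" .
    moreover have "lump = False" using False by simp
    ultimately show ?thesis
      using elem_form_monotone_exact[OF J j m dt dt4 e1_lower L D_def[THEN meta_eq_to_obj_eq]]
      unfolding \<kappa>_def by simp
  qed
  then show ?thesis by (simp add: \<kappa>_def a_def b_def mult.assoc)
qed

lemma norm_elem_slope_le: "norm (elem_slope J c j) \<le> real J * (norm (c (j - 1)) + norm (c j))"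
  unfolding elem_slope_def using norm_triangle_ineq4[of "c j" "c (j - 1)"]
  by (simp add: mult_left_mono add.commute)

lemma abs_lumped_node_sum_le:
  assumes J: "J > 0" and j: "j \<ge> 1" and B: "\<And>t. t \<in> element J j \<Longrightarrow> \<bar>g t\<bar> \<le> B"
  shows "\<bar>(1 / real J) / 2 * (g (node J j) + g (node J (j - 1)))\<bar> \<le> (1 / real J) * B"
proof -
  have "\<bar>g (node J j) + g (node J (j - 1))\<bar> \<le> 2 * B"
    using B element_ends[OF J j] by (smt (verit))
  then show ?thesis using J by (simp add: abs_mult field_simps)
qed

lemma abs_mass_integrand_diff_le:
  assumes dt: "dt > 0" and x: "\<bar>elem_interp J Xn j t \<bullet> e1\<bar> \<le> Mx" and L: "norm (elem_slope J Xn j) \<le> Lx"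
    and a: "norm (elem_interp J (\<lambda>i. c i - c' i) j t) \<le> a" and b: "norm (elem_interp J v j t) \<le> b"
  shows "\<bar>mass_integrand J Xn dt c v j t - mass_integrand J Xn dt c' v j t\<bar> \<le> Mx * Lx / dt * (a * b)"
proof -
  have "\<bar>elem_interp J (\<lambda>i. c i - c' i) j t \<bullet> elem_interp J v j t\<bar>
      \<le> norm (elem_interp J (\<lambda>i. c i - c' i) j t) * norm (elem_interp J v j t)"
    by (rule Cauchy_Schwarz_ineq2)
  also have "\<dots> \<le> a * b"
    using a b by (intro mult_mono) (auto intro: order_trans[OF norm_ge_zero])
  finally have "\<bar>elem_interp J (\<lambda>i. c i - c' i) j t \<bullet> elem_interp J v j t\<bar> \<le> a * b" .
  moreover have "0 \<le> Mx" "0 \<le> Lx" using x order_trans[OF norm_ge_zero L] by linarith+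
  ultimately show ?thesis
    unfolding mass_integrand_diff abs_mult abs_divide using dt x L
    by (auto intro!: mult_mono divide_right_mono)
qed

lemma abs_length_integrand_diff_le:
  assumes a: "norm (elem_slope J (\<lambda>i. c i - c' i) j) \<le> a" and b: "norm (elem_interp J v j t) \<le> b"
  shows "\<bar>length_integrand J Xn c v j t - length_integrand J Xn c' v j t\<bar> \<le> a * b"
proof -
  have "\<bar>elem_interp J v j t \<bullet> e1\<bar> * \<bar>norm (elem_slope J (\<lambda>i. Xn i + c i) j) - norm (elem_slope J (\<lambda>i. Xn i + c' i) j)\<bar>
      \<le> b * a"
  proof (rule mult_mono')
    show "\<bar>elem_interp J v j t \<bullet> e1\<bar> \<le> b" using abs_inner_e1_le b by (rule order_trans)
    show "\<bar>norm (elem_slope J (\<lambda>i. Xn i + c i) j) - norm (elem_slope J (\<lambda>i. Xn i + c' i) j)\<bar> \<le> a"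
      using norm_slope_shift_diff_le[where Xn=Xn] a by (rule order_trans)
  qed simp_all
  then show ?thesis
    unfolding length_integrand_diff abs_mult by (simp add: mult.commute)
qed

lemma abs_stiffness_integrand_diff_le:
  assumes x: "\<bar>elem_interp J Xn j t \<bullet> e1\<bar> \<le> Mx" and Lm: "0 < Lm" "Lm \<le> norm (elem_slope J Xn j)"
    and a: "norm (elem_slope J (\<lambda>i. c i - c' i) j) \<le> a" and b: "norm (elem_slope J v j) \<le> b"
  shows "\<bar>stiffness_integrand J Xn c v j t - stiffness_integrand J Xn c' v j t\<bar> \<le> Mx / Lm * (a * b)"
proof -
  have "\<bar>elem_slope J (\<lambda>i. c i - c' i) j \<bullet> elem_slope J v j\<bar>
      \<le> norm (elem_slope J (\<lambda>i. c i - c' i) j) * norm (elem_slope J v j)"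
    by (rule Cauchy_Schwarz_ineq2)
  also have "\<dots> \<le> a * b"
    using a b by (intro mult_mono) (auto intro: order_trans[OF norm_ge_zero])
  finally have "\<bar>elem_slope J (\<lambda>i. c i - c' i) j \<bullet> elem_slope J v j\<bar> \<le> a * b" .
  moreover have "0 \<le> Mx" using x by linarith
  ultimately show ?thesis
    unfolding stiffness_integrand_diff abs_mult abs_divide using x Lm
    by (auto intro!: mult_mono frac_le)
qed

lemma elem_form_Lipschitz:
  fixes c c' v :: "nat \<Rightarrow> real \<times> real"
  assumes J: "J > 0" and j: "j \<in> {1..J}" and dt: "dt > 0"
    and Mx: "\<And>t. t \<in> element J j \<Longrightarrow> \<bar>elem_interp J Xn j t \<bullet> e1\<bar> \<le> Mx"
    and Lx: "norm (elem_slope J Xn j) \<le> Lx" and Lm: "0 < Lm" "Lm \<le> norm (elem_slope J Xn j)"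
  defines "D \<equiv> \<lambda>i. c i - c' i"
  shows "\<bar>elem_form lump J Xn dt c v j - elem_form lump J Xn dt c' v j\<bar>
     \<le> (1 / real J) * (Mx * Lx / dt + real J + Mx * (real J)\<^sup>2 / Lm)
        * ((norm (D (j - 1)) + norm (D j)) * (norm (v (j - 1)) + norm (v j)))"
proof -
  have j1: "j \<ge> 1" using j by auto
  define nD where "nD = norm (D (j - 1)) + norm (D j)"
  define nv where "nv = norm (v (j - 1)) + norm (v j)"
  have interp: "norm (elem_interp J D j t) \<le> nD" "norm (elem_interp J v j t) \<le> nv" if "t \<in> element J j" for t
    using norm_elem_interp_le_sum[OF J j1 that] by (auto simp: nD_def nv_def)
  have slope: "norm (elem_slope J D j) \<le> real J * nD" "norm (elem_slope J v j) \<le> real J * nv"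
    unfolding nD_def nv_def by (rule norm_elem_slope_le)+
  note mass = abs_mass_integrand_diff_le[OF dt Mx Lx interp[unfolded D_def]]
  note length = abs_length_integrand_diff_le[OF slope(1)[unfolded D_def] interp(2)]
  note stiffness = abs_stiffness_integrand_diff_le[OF Mx Lm slope[unfolded D_def]]
  have "\<bar>elem_form lump J Xn dt c v j - elem_form lump J Xn dt c' v j\<bar>
      \<le> (1 / real J) * (Mx * Lx / dt * (nD * nv)) + (1 / real J) * (real J * nD * nv)
        + (1 / real J) * (Mx / Lm * (real J * nD * (real J * nv)))"
    unfolding elem_form_diff
  proof (intro order_trans[OF abs_triangle_ineq] add_mono)
    show "\<bar>if lump then (1 / real J) / 2 * ((mass_integrand J Xn dt c v j (node J j) - mass_integrand J Xn dt c' v j (node J j))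
                  + (mass_integrand J Xn dt c v j (node J (j - 1)) - mass_integrand J Xn dt c' v j (node J (j - 1))))
      else integral (element J j) (\<lambda>t. mass_integrand J Xn dt c v j t - mass_integrand J Xn dt c' v j t)\<bar>
      \<le> (1 / real J) * (Mx * Lx / dt * (nD * nv))"
      using abs_lumped_node_sum_le[OF J j1, of "\<lambda>t. mass_integrand J Xn dt c v j t - mass_integrand J Xn dt c' v j t", OF mass]
        abs_integral_element_le[OF J j1, of "\<lambda>t. mass_integrand J Xn dt c v j t - mass_integrand J Xn dt c' v j t", OF _ mass]
      by (simp add: continuous_intros continuous_on_integrands)
  qed (use abs_integral_element_le[OF J j1, of "\<lambda>t. length_integrand J Xn c v j t - length_integrand J Xn c' v j t", OF _ length]
        abs_integral_element_le[OF J j1, of "\<lambda>t. stiffness_integrand J Xn c v j t - stiffness_integrand J Xn c' v j t", OF _ stiffness]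
        in \<open>simp_all add: continuous_intros continuous_on_integrands\<close>)
  also have "\<dots> = (1 / real J) * (Mx * Lx / dt + real J + Mx * (real J)\<^sup>2 / Lm) * (nD * nv)"
    by (simp add: power2_eq_square algebra_simps)
  finally show ?thesis by (simp add: nD_def nv_def)
qed

lemma sum_atMost_le_sum_adjacent:
  fixes f :: "nat \<Rightarrow> real"
  assumes "\<And>i. f i \<ge> 0" "J > 0"
  shows "(\<Sum>i\<le>J. f i) \<le> (\<Sum>j=1..J. f (j - 1) + f j)"
proof -
  have "f 0 = f (1 - 1)" by simp
  also have "\<dots> \<le> (\<Sum>j=1..J. f (j - 1))" using assms by (intro member_le_sum) auto
  finally show ?thesis
    by (simp add: atMost_atLeast0 sum.atLeast_Suc_atMost sum.distrib)
qed

lemma sum_adjacent_le_sum_atMost: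
  fixes f :: "nat \<Rightarrow> real"
  assumes "\<And>i. f i \<ge> 0"
  shows "(\<Sum>j=1..J. f (j - 1) + f j) \<le> 2 * (\<Sum>i\<le>J. f i)"
proof -
  have "(\<Sum>j=1..J. f (j - 1)) = (\<Sum>i\<in>(\<lambda>j. j - 1) ` {1..J}. f i)"
    by (subst sum.reindex) (auto simp: inj_on_def)
  also have "\<dots> \<le> (\<Sum>i\<le>J. f i)" using assms by (intro sum_mono2) auto
  finally have "(\<Sum>j=1..J. f (j - 1)) \<le> (\<Sum>i\<le>J. f i)" .
  moreover have "(\<Sum>j=1..J. f j) \<le> (\<Sum>i\<le>J. f i)" using assms by (intro sum_mono2) auto
  ultimately show ?thesis by (simp add: sum.distrib)
qed

lemma sum_mult_le_mult_sum:
  fixes a b :: "'i \<Rightarrow> real"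
  assumes "\<And>i. a i \<ge> 0" "\<And>i. b i \<ge> 0" "finite A"
  shows "(\<Sum>j\<in>A. a j * b j) \<le> (\<Sum>j\<in>A. a j) * (\<Sum>j\<in>A. b j)"
proof -
  have "(\<Sum>j\<in>A. a j * b j) \<le> (\<Sum>j\<in>A. a j * (\<Sum>k\<in>A. b k))"
    using assms by (intro sum_mono mult_left_mono member_le_sum) auto
  then show ?thesis by (simp add: sum_distrib_right)
qed

lemma bdry_form_diff:
  "bdry_form J Xn P1 P2 rh c e - bdry_form J Xn P1 P2 rh c' e
     = (\<Sum>p\<in>P2. posp (rh p) * (end_value J (\<lambda>i. c i - c' i) p \<bullet> e1) * (end_value J e p \<bullet> e1))"
proof -
  have "bdry_form J Xn P1 P2 rh c e - bdry_form J Xn P1 P2 rh c' e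
     = (\<Sum>p\<in>P2. ((posp (rh p) *\<^sub>R (end_value J Xn p + end_value J c p) + negp (rh p) *\<^sub>R end_value J Xn p) \<bullet> e1)
                  * (end_value J e p \<bullet> e1)
                - ((posp (rh p) *\<^sub>R (end_value J Xn p + end_value J c' p) + negp (rh p) *\<^sub>R end_value J Xn p) \<bullet> e1)
                  * (end_value J e p \<bullet> e1))"
    by (simp add: bdry_form_def sum_subtractf)
  also have "\<dots> = (\<Sum>p\<in>P2. posp (rh p) * (end_value J (\<lambda>i. c i - c' i) p \<bullet> e1) * (end_value J e p \<bullet> e1))"
    by (intro sum.cong) (auto simp: end_value_def inner_add_left inner_diff_left algebra_simps)
  finally show ?thesis .
qed

lemma posp_nonneg: "posp r \<ge> 0"
  by (simp add: posp_def)

lemma norm_end_value_le: "norm (end_value J c p) \<le> (\<Sum>i\<le>J. norm (c i))"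
  unfolding end_value_def by (auto intro!: member_le_sum)

lemma abs_bdry_form_diff_le:
  assumes P2: "P2 \<subseteq> {0, 1}"
  shows "\<bar>bdry_form J Xn P1 P2 rh c v - bdry_form J Xn P1 P2 rh c' v\<bar>
    \<le> 2 * (\<bar>rh 0\<bar> + \<bar>rh 1\<bar>) * (\<Sum>i\<le>J. norm (c i - c' i)) * (\<Sum>i\<le>J. norm (v i))"
proof -
  define D where "D = (\<lambda>i. c i - c' i)"
  define SD where "SD = (\<Sum>i\<le>J. norm (D i))"
  define Sv where "Sv = (\<Sum>i\<le>J. norm (v i))"
  have SD: "SD \<ge> 0" and Sv: "Sv \<ge> 0" by (auto simp: SD_def Sv_def sum_nonneg)
  have "\<bar>bdry_form J Xn P1 P2 rh c v - bdry_form J Xn P1 P2 rh c' v\<bar>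
      \<le> (\<Sum>p\<in>P2. \<bar>posp (rh p) * (end_value J D p \<bullet> e1) * (end_value J v p \<bullet> e1)\<bar>)"
    unfolding bdry_form_diff D_def by (rule sum_abs)
  also have "\<dots> \<le> (\<Sum>p\<in>P2. (\<bar>rh 0\<bar> + \<bar>rh 1\<bar>) * SD * Sv)"
  proof (intro sum_mono)
    fix p assume "p \<in> P2"
    then have "\<bar>posp (rh p)\<bar> \<le> \<bar>rh 0\<bar> + \<bar>rh 1\<bar>" using P2 by (auto simp: posp_def)
    then show "\<bar>posp (rh p) * (end_value J D p \<bullet> e1) * (end_value J v p \<bullet> e1)\<bar> \<le> (\<bar>rh 0\<bar> + \<bar>rh 1\<bar>) * SD * Sv"
      unfolding abs_mult SD_def Sv_def
      using order_trans[OF abs_inner_e1_le norm_end_value_le] SD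
      by (intro mult_mono) (auto simp: SD_def)
  qed
  also have "\<dots> \<le> 2 * ((\<bar>rh 0\<bar> + \<bar>rh 1\<bar>) * SD * Sv)"
  proof -
    have "card P2 \<le> card {0::real, 1}" using P2 by (intro card_mono) auto
    then show ?thesis using SD Sv by (simp add: mult_right_mono)
  qed
  finally show ?thesis by (simp add: SD_def Sv_def D_def algebra_simps)
qed

locale discrete_step =
  fixes J :: nat and Xn :: "nat \<Rightarrow> real \<times> real" and dt m :: real
    and lump :: bool and P1 P2 :: "real set" and rh :: "real \<Rightarrow> real"
  assumes J: "J > 0" and m: "m > 0" and dt: "dt > 0" and dt4: "dt < 4 * m\<^sup>2"
    and e1_lower: "\<And>j t. j \<in> {1..J} \<Longrightarrow> t \<in> element J j \<Longrightarrow> m \<le> elem_interp J Xn j t \<bullet> e1"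
    and slope_pos: "\<And>j. j \<in> {1..J} \<Longrightarrow> norm (elem_slope J Xn j) > 0"
    and P2: "P2 \<subseteq> {0, 1}"
begin

definition "Lmin = Min ((\<lambda>j. norm (elem_slope J Xn j)) ` {1..J})"
definition "Lmax = Max ((\<lambda>j. norm (elem_slope J Xn j)) ` {1..J})"
definition "Mx = 2 * (\<Sum>i\<le>J. norm (Xn i))"
definition "coercivity = (1 - sqrt dt / (2 * m)) * (m * Lmin / dt) / (6 * real J)"
definition "Lipschitz_const =
  4 * ((1 / real J) * (Mx * Lmax / dt + real J + Mx * (real J)\<^sup>2 / Lmin)) + 2 * (\<bar>rh 0\<bar> + \<bar>rh 1\<bar>)"

lemma Lmin_le: "j \<in> {1..J} \<Longrightarrow> Lmin \<le> norm (elem_slope J Xn j)"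
  unfolding Lmin_def by (rule Min_le) auto

lemma Lmax_ge: "j \<in> {1..J} \<Longrightarrow> norm (elem_slope J Xn j) \<le> Lmax"
  unfolding Lmax_def by (rule Max_ge) auto

lemma Lmin_pos: "Lmin > 0"
proof -
  have "Lmin \<in> (\<lambda>j. norm (elem_slope J Xn j)) ` {1..J}"
    unfolding Lmin_def using J by (intro Min_in) auto
  then show ?thesis using slope_pos by auto
qed

lemma time_step_factor: "0 < 1 - sqrt dt / (2 * m)"
proof -
  have "sqrt dt < sqrt (4 * m\<^sup>2)" using dt4 by simp
  also have "\<dots> = 2 * m" using m by (simp add: real_sqrt_mult)
  finally show ?thesis using m by simp
qed

lemma coercivity_pos: "coercivity > 0"
  unfolding coercivity_def using time_step_factor m Lmin_pos dt J by simp

lemma abs_e1_le_Mx: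
  assumes j: "j \<in> {1..J}" and t: "t \<in> element J j"
  shows "\<bar>elem_interp J Xn j t \<bullet> e1\<bar> \<le> Mx"
proof -
  have "norm (Xn (j - 1)) \<le> (\<Sum>i\<le>J. norm (Xn i))" "norm (Xn j) \<le> (\<Sum>i\<le>J. norm (Xn i))"
    using j by (auto intro!: member_le_sum)
  moreover have "\<bar>elem_interp J Xn j t \<bullet> e1\<bar> \<le> norm (Xn (j - 1)) + norm (Xn j)"
    using j order_trans[OF abs_inner_e1_le norm_elem_interp_le_sum[OF J _ t]] by simp
  ultimately show ?thesis unfolding Mx_def by linarith
qed

lemma Mx_nonneg: "Mx \<ge> 0"
  by (simp add: Mx_def sum_nonneg)

lemma disc_form_strongly_monotone:
  fixes c c' :: "nat \<Rightarrow> real \<times> real"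
  defines "D \<equiv> \<lambda>i. c i - c' i"
  shows "coercivity * (\<Sum>i\<le>J. (norm (D i))\<^sup>2)
     \<le> disc_form lump J Xn dt P1 P2 rh c D - disc_form lump J Xn dt P1 P2 rh c' D"
proof -
  have elem: "coercivity * ((norm (D (j - 1)))\<^sup>2 + (norm (D j))\<^sup>2)
      \<le> elem_form lump J Xn dt c D j - elem_form lump J Xn dt c' D j" if j: "j \<in> {1..J}" for j
  proof -
    have "coercivity \<le> (1 - sqrt dt / (2 * m)) * (m * norm (elem_slope J Xn j) / dt) / (6 * real J)"
      unfolding coercivity_def using Lmin_le[OF j] time_step_factor m dt J
      by (intro divide_right_mono mult_left_mono) auto
    then show ?thesis
      unfolding D_def
      by (rule order_trans[OF mult_right_mono elem_form_strongly_monotone[OF J _ m dt dt4 e1_lower[OF j] slope_pos[OF j], of c c']])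
        (use j in auto)
  qed
  have "(\<Sum>j=1..J. coercivity * ((norm (D (j - 1)))\<^sup>2 + (norm (D j))\<^sup>2))
      \<le> (\<Sum>j=1..J. elem_form lump J Xn dt c D j - elem_form lump J Xn dt c' D j)"
    by (rule sum_mono) (rule elem)
  moreover have "0 \<le> bdry_form J Xn P1 P2 rh c D - bdry_form J Xn P1 P2 rh c' D"
    unfolding bdry_form_diff D_def[symmetric]
    by (intro sum_nonneg) (simp add: posp_nonneg mult.assoc)
  ultimately have "(\<Sum>j=1..J. coercivity * ((norm (D (j - 1)))\<^sup>2 + (norm (D j))\<^sup>2))
      \<le> disc_form lump J Xn dt P1 P2 rh c D - disc_form lump J Xn dt P1 P2 rh c' D"
    unfolding disc_form_def sum_subtractf by linarith
  moreover have "coercivity * (\<Sum>i\<le>J. (norm (D i))\<^sup>2) \<le> (\<Sum>j=1..J. coercivity * ((norm (D (j - 1)))\<^sup>2 + (norm (D j))\<^sup>2))"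
    unfolding sum_distrib_left[symmetric] using coercivity_pos J
    by (intro mult_left_mono sum_atMost_le_sum_adjacent) auto
  ultimately show ?thesis by linarith
qed

lemma abs_sum_elem_form_diff_le:
  fixes c c' v :: "nat \<Rightarrow> real \<times> real"
  defines "D \<equiv> \<lambda>i. c i - c' i"
    and "K \<equiv> (1 / real J) * (Mx * Lmax / dt + real J + Mx * (real J)\<^sup>2 / Lmin)"
  shows "\<bar>\<Sum>j=1..J. elem_form lump J Xn dt c v j - elem_form lump J Xn dt c' v j\<bar>
    \<le> 4 * K * (\<Sum>i\<le>J. norm (D i)) * (\<Sum>i\<le>J. norm (v i))"
proof -
  have K: "K \<ge> 0"
  proof -
    have "Lmax \<ge> 0" using order_trans[OF norm_ge_zero Lmax_ge[of 1]] J by simp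
    then show ?thesis unfolding K_def using J dt Lmin_pos Mx_nonneg by simp
  qed
  have "\<bar>\<Sum>j=1..J. elem_form lump J Xn dt c v j - elem_form lump J Xn dt c' v j\<bar>
      \<le> (\<Sum>j=1..J. \<bar>elem_form lump J Xn dt c v j - elem_form lump J Xn dt c' v j\<bar>)"
    by (rule sum_abs)
  also have "\<dots> \<le> (\<Sum>j=1..J. K * ((norm (D (j - 1)) + norm (D j)) * (norm (v (j - 1)) + norm (v j))))"
  proof (rule sum_mono)
    fix j assume j: "j \<in> {1..J}"
    show "\<bar>elem_form lump J Xn dt c v j - elem_form lump J Xn dt c' v j\<bar>
        \<le> K * ((norm (D (j - 1)) + norm (D j)) * (norm (v (j - 1)) + norm (v j)))"
      unfolding K_def D_def
      by (rule elem_form_Lipschitz[OF J j dt abs_e1_le_Mx[OF j] Lmax_ge[OF j] Lmin_pos Lmin_le[OF j]])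
  qed
  also have "\<dots> \<le> K * ((\<Sum>j=1..J. norm (D (j - 1)) + norm (D j)) * (\<Sum>j=1..J. norm (v (j - 1)) + norm (v j)))"
    unfolding sum_distrib_left[symmetric] using K by (intro mult_left_mono sum_mult_le_mult_sum) auto
  also have "\<dots> \<le> K * ((2 * (\<Sum>i\<le>J. norm (D i))) * (2 * (\<Sum>i\<le>J. norm (v i))))"
    using K by (intro mult_left_mono mult_mono sum_adjacent_le_sum_atMost) (auto intro: sum_nonneg)
  finally show ?thesis by simp
qed

lemma disc_form_Lipschitz:
  fixes c c' v :: "nat \<Rightarrow> real \<times> real"
  defines "D \<equiv> \<lambda>i. c i - c' i"
  shows "\<bar>disc_form lump J Xn dt P1 P2 rh c v - disc_form lump J Xn dt P1 P2 rh c' v\<bar>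
    \<le> Lipschitz_const * (\<Sum>i\<le>J. norm (D i)) * (\<Sum>i\<le>J. norm (v i))"
proof -
  have "disc_form lump J Xn dt P1 P2 rh c v - disc_form lump J Xn dt P1 P2 rh c' v
      = (\<Sum>j=1..J. elem_form lump J Xn dt c v j - elem_form lump J Xn dt c' v j)
        + (bdry_form J Xn P1 P2 rh c v - bdry_form J Xn P1 P2 rh c' v)"
    by (simp add: disc_form_def sum_subtractf)
  then have "\<bar>disc_form lump J Xn dt P1 P2 rh c v - disc_form lump J Xn dt P1 P2 rh c' v\<bar>
      \<le> \<bar>\<Sum>j=1..J. elem_form lump J Xn dt c v j - elem_form lump J Xn dt c' v j\<bar>
        + \<bar>bdry_form J Xn P1 P2 rh c v - bdry_form J Xn P1 P2 rh c' v\<bar>"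
    by (simp add: abs_triangle_ineq)
  also have "\<dots> \<le> 4 * ((1 / real J) * (Mx * Lmax / dt + real J + Mx * (real J)\<^sup>2 / Lmin))
        * (\<Sum>i\<le>J. norm (D i)) * (\<Sum>i\<le>J. norm (v i))
      + 2 * (\<bar>rh 0\<bar> + \<bar>rh 1\<bar>) * (\<Sum>i\<le>J. norm (D i)) * (\<Sum>i\<le>J. norm (v i))"
    unfolding D_def
    by (intro add_mono abs_sum_elem_form_diff_le abs_bdry_form_diff_le[OF P2])
  finally show ?thesis by (simp add: Lipschitz_const_def algebra_simps)
qed

end

section \<open>Degrees of freedom and existence\<close>

text \<open>Unknowns are indexed by \<open>(i, k)\<close>: the \<open>e1\<close>-component (\<open>k = False\<close>) or \<open>e2\<close>-component
  (\<open>k = True\<close>) of the nodal value at \<open>q\<^sub>i\<close>. In the periodic case node \<open>J\<close> is identified with node \<open>0\<close>,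
  and components fixed by the boundary conditions are not unknowns.\<close>

definition periodic_index :: "bool \<Rightarrow> nat \<Rightarrow> nat \<Rightarrow> nat" where
  "periodic_index per J i = (if per \<and> i = J then 0 else i)"

definition nodal_of_dofs :: "bool \<Rightarrow> nat \<Rightarrow> (nat \<times> bool \<Rightarrow> real) \<Rightarrow> nat \<Rightarrow> real \<times> real" where
  "nodal_of_dofs per J w i = (w (periodic_index per J i, False), w (periodic_index per J i, True))"

definition pinned :: "nat \<Rightarrow> real set \<Rightarrow> real set \<Rightarrow> real set \<Rightarrow> nat \<times> bool \<Rightarrow> bool" where
  "pinned J PD P1 P2 ik = (case ik of (i, k) \<Rightarrow>
     (i = 0 \<and> (0 \<in> PD \<or> (if k then 0 \<in> P2 else 0 \<in> P1))) \<or> (i = J \<and> (1 \<in> PD \<or> (if k then 1 \<in> P2 else 1 \<in> P1))))"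

definition dofs :: "bool \<Rightarrow> nat \<Rightarrow> real set \<Rightarrow> real set \<Rightarrow> real set \<Rightarrow> (nat \<times> bool) set" where
  "dofs per J PD P1 P2 = {(i, k). i \<le> J \<and> \<not> (per \<and> i = J) \<and> \<not> pinned J PD P1 P2 (i, k)}"

lemma nodal_of_dofs_add: "nodal_of_dofs per J (\<lambda>x. u x + v x) = (\<lambda>i. nodal_of_dofs per J u i + nodal_of_dofs per J v i)"
  by (simp add: nodal_of_dofs_def fun_eq_iff)

lemma nodal_of_dofs_scale: "nodal_of_dofs per J (\<lambda>x. a * u x) = (\<lambda>i. a *\<^sub>R nodal_of_dofs per J u i)"
  by (simp add: nodal_of_dofs_def fun_eq_iff)

lemma nodal_of_dofs_diff: "nodal_of_dofs per J (\<lambda>x. u x - v x) = (\<lambda>i. nodal_of_dofs per J u i - nodal_of_dofs per J v i)"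
  by (simp add: nodal_of_dofs_def fun_eq_iff)

lemma dofs_subset: "dofs per J PD P1 P2 \<subseteq> {..J} \<times> UNIV"
  by (auto simp: dofs_def)

lemma finite_dofs: "finite (dofs per J PD P1 P2)"
  by (rule finite_subset[OF dofs_subset]) auto

lemma sum_dofs_eq_sum_nodes:
  assumes "\<And>ik. ik \<notin> dofs per J PD P1 P2 \<Longrightarrow> f ik = 0"
  shows "(\<Sum>ik\<in>dofs per J PD P1 P2. f ik) = (\<Sum>i\<le>J. f (i, False) + f (i, True))"
proof -
  have "(\<Sum>ik\<in>dofs per J PD P1 P2. f ik) = (\<Sum>ik\<in>{..J} \<times> (UNIV :: bool set). f ik)"
    by (rule sum.mono_neutral_left) (use assms dofs_subset in auto)
  also have "\<dots> = (\<Sum>i\<le>J. \<Sum>k\<in>UNIV. f (i, k))"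
    by (simp add: sum.cartesian_product)
  also have "\<dots> = (\<Sum>i\<le>J. f (i, False) + f (i, True))"
    by (simp add: UNIV_bool)
  finally show ?thesis .
qed

lemma L2_set_dofs_le:
  assumes w: "w \<in> vanishing_outside (dofs per J PD P1 P2)"
  shows "(L2_set w (dofs per J PD P1 P2))\<^sup>2 \<le> (\<Sum>i\<le>J. (norm (nodal_of_dofs per J w i))\<^sup>2)"
proof -
  have "(L2_set w (dofs per J PD P1 P2))\<^sup>2 = (\<Sum>i\<le>J. (w (i, False))\<^sup>2 + (w (i, True))\<^sup>2)"
    unfolding power2_L2_set using w by (intro sum_dofs_eq_sum_nodes) (auto simp: vanishing_outside_def)
  also have "\<dots> \<le> (\<Sum>i\<le>J. (norm (nodal_of_dofs per J w i))\<^sup>2)"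
  proof (rule sum_mono)
    fix i assume "i \<in> {..J}"
    show "(w (i, False))\<^sup>2 + (w (i, True))\<^sup>2 \<le> (norm (nodal_of_dofs per J w i))\<^sup>2"
    proof (cases "per \<and> i = J")
      case True
      then have "w (i, False) = 0" "w (i, True) = 0"
        using w by (auto simp: vanishing_outside_def dofs_def)
      then show ?thesis by simp
    qed (auto simp: nodal_of_dofs_def periodic_index_def norm_Pair)
  qed
  finally show ?thesis .
qed

lemma sum_norm_nodal_of_dofs_le:
  assumes w: "w \<in> vanishing_outside (dofs per J PD P1 P2)"
  shows "(\<Sum>i\<le>J. norm (nodal_of_dofs per J w i))
    \<le> 2 * sqrt (real (card (dofs per J PD P1 P2))) * L2_set w (dofs per J PD P1 P2)"
proof -
  define S where "S = dofs per J PD P1 P2"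
  have "(\<Sum>i\<le>J. norm (nodal_of_dofs per J w i))
      \<le> (\<Sum>i\<le>J. \<bar>w (periodic_index per J i, False)\<bar> + \<bar>w (periodic_index per J i, True)\<bar>)"
    unfolding nodal_of_dofs_def by (intro sum_mono) (simp add: norm_Pair sqrt_sum_squares_le_sum_abs)
  also have "\<dots> \<le> 2 * (\<Sum>i\<le>J. \<bar>w (i, False)\<bar> + \<bar>w (i, True)\<bar>)"
  proof (cases per)
    case True
    have "(\<Sum>i\<le>J. \<bar>w (periodic_index per J i, False)\<bar> + \<bar>w (periodic_index per J i, True)\<bar>)
        = (\<Sum>i<J. \<bar>w (i, False)\<bar> + \<bar>w (i, True)\<bar>) + (\<bar>w (0, False)\<bar> + \<bar>w (0, True)\<bar>)"
      using True by (simp add: lessThan_Suc_atMost[symmetric] periodic_index_def)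
    also have "\<dots> \<le> (\<Sum>i\<le>J. \<bar>w (i, False)\<bar> + \<bar>w (i, True)\<bar>) + (\<Sum>i\<le>J. \<bar>w (i, False)\<bar> + \<bar>w (i, True)\<bar>)"
      by (intro add_mono sum_mono2 member_le_sum) auto
    finally show ?thesis by simp
  qed (simp add: periodic_index_def sum_nonneg)
  also have "(\<Sum>i\<le>J. \<bar>w (i, False)\<bar> + \<bar>w (i, True)\<bar>) = (\<Sum>ik\<in>S. \<bar>w ik\<bar> * \<bar>1\<bar>)"
    unfolding S_def by (subst sum_dofs_eq_sum_nodes) (use w in \<open>auto simp: vanishing_outside_def\<close>)
  also have "\<dots> \<le> L2_set w S * L2_set (\<lambda>_. 1) S"
    by (rule L2_set_mult_ineq)
  finally show ?thesis by (simp add: L2_set_constant S_def mult.commute)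
qed

lemma nodal_interp_dofs_in_Vh_bd:
  assumes J: "J > 0" and w: "w \<in> vanishing_outside (dofs per J PD P1 P2)"
    and bdry: "PD \<union> P1 \<union> P2 \<subseteq> bdry per"
  shows "nodal_interp J (nodal_of_dofs per J w) \<in> Vh_bd per J PD {} P1 P2"
proof -
  define c where "c = nodal_of_dofs per J w"
  have c_per: "per \<longrightarrow> c J = c 0" by (simp add: c_def nodal_of_dofs_def periodic_index_def)
  have ends: "nodal_interp J c 0 = c 0" "nodal_interp J c 1 = c J"
    using nodal_interp_node[OF J, of 0 c] nodal_interp_node[OF J, of J c] J by simp_all
  have pinned_zero: "w (i, k) = 0" if "pinned J PD P1 P2 (i, k)" for i k
    using w that by (auto simp: vanishing_outside_def dofs_def)
  have aperiodic: "\<not> per" "r = 0 \<or> r = 1" if "r \<in> PD \<union> P1 \<union> P2" for r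
    using bdry that by (auto simp: bdry_def split: if_splits)
  show ?thesis
    unfolding Vh_bd_def c_def[symmetric]
  proof (intro CollectI conjI ballI nodal_interp_in_Vh[OF J c_per])
    show "nodal_interp J c r \<bullet> e1 = 0" if "r \<in> P1" for r
      using aperiodic[of r] that ends pinned_zero[of 0 False] pinned_zero[of J False]
      by (auto simp: c_def nodal_of_dofs_def periodic_index_def pinned_def e1_def)
    show "nodal_interp J c r \<bullet> e2 = 0" if "r \<in> P2" for r
      using aperiodic[of r] that ends pinned_zero[of 0 True] pinned_zero[of J True]
      by (auto simp: c_def nodal_of_dofs_def periodic_index_def pinned_def e2_def)
    show "nodal_interp J c r = 0" if "r \<in> PD" for r
      using aperiodic[of r] that ends pinned_zero[of 0] pinned_zero[of J]
      by (auto simp: c_def nodal_of_dofs_def periodic_index_def pinned_def zero_prod_def)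
  qed simp
qed

lemma Vh_bd_nodal_eq_nodal_of_dofs:
  assumes J: "J > 0" and eta: "eta \<in> Vh_bd per J PD P0 P1 P2"
    and bdry: "PD \<union> P1 \<union> P2 \<subseteq> bdry per"
  obtains v where "v \<in> vanishing_outside (dofs per J PD P1 P2)"
    "\<And>i. i \<le> J \<Longrightarrow> nodal J eta i = nodal_of_dofs per J v i"
proof
  define v where "v = (\<lambda>(i, k). if (i, k) \<in> dofs per J PD P1 P2 then (if k then snd (nodal J eta i) else fst (nodal J eta i)) else 0)"
  show "v \<in> vanishing_outside (dofs per J PD P1 P2)"
    by (auto simp: v_def vanishing_outside_def)
  have eta_bd: "\<And>r. r \<in> P1 \<Longrightarrow> fst (eta r) = 0" "\<And>r. r \<in> P2 \<Longrightarrow> snd (eta r) = 0" "\<And>r. r \<in> PD \<Longrightarrow> eta r = 0"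
    and eta_per: "per \<Longrightarrow> eta 0 = eta 1"
    using eta by (auto simp: Vh_bd_def Vh_def e1_def e2_def inner_prod_def)
  have pinned_zero: "(if k then snd (nodal J eta i) else fst (nodal J eta i)) = 0"
    if "pinned J PD P1 P2 (i, k)" for i k
    using that eta_bd[of 0] eta_bd[of 1] J by (cases k) (auto simp: pinned_def nodal_def)
  fix i assume i: "i \<le> J"
  show "nodal J eta i = nodal_of_dofs per J v i"
  proof (cases "per \<and> i = J")
    case True
    then have "PD = {}" "P1 = {}" "P2 = {}" using bdry by (auto simp: bdry_def)
    then have "(0, k) \<in> dofs per J PD P1 P2" for k using J by (auto simp: dofs_def pinned_def)
    then show ?thesis
      using True eta_per J by (simp add: v_def nodal_of_dofs_def periodic_index_def nodal_def)
  next
    case False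
    have "v (i, k) = (if k then snd (nodal J eta i) else fst (nodal J eta i))" for k
      using i False pinned_zero[of i k] by (auto simp: v_def dofs_def)
    from this[of False] this[of True] False show ?thesis
      by (auto simp: nodal_of_dofs_def periodic_index_def)
  qed
qed

context discrete_step
begin

lemma disc_form_dofs_strongly_monotone:
  assumes "w \<in> vanishing_outside (dofs per J PD P1 P2)" "w' \<in> vanishing_outside (dofs per J PD P1 P2)"
  defines "R \<equiv> nodal_of_dofs per J" and "D \<equiv> \<lambda>i. w i - w' i"
  shows "coercivity * (L2_set D (dofs per J PD P1 P2))\<^sup>2
    \<le> disc_form lump J Xn dt P1 P2 rh (R w) (R D) - disc_form lump J Xn dt P1 P2 rh (R w') (R D)"
proof -
  have "D \<in> vanishing_outside (dofs per J PD P1 P2)"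
    using assms by (simp add: D_def vanishing_outside_def)
  then have "coercivity * (L2_set D (dofs per J PD P1 P2))\<^sup>2 \<le> coercivity * (\<Sum>i\<le>J. (norm (R D i))\<^sup>2)"
    using coercivity_pos L2_set_dofs_le unfolding R_def by (intro mult_left_mono) auto
  also have "\<dots> \<le> disc_form lump J Xn dt P1 P2 rh (R w) (R D) - disc_form lump J Xn dt P1 P2 rh (R w') (R D)"
    unfolding R_def D_def nodal_of_dofs_diff by (rule disc_form_strongly_monotone)
  finally show ?thesis .
qed

lemma disc_form_dofs_Lipschitz:
  assumes "w \<in> vanishing_outside (dofs per J PD P1 P2)" "w' \<in> vanishing_outside (dofs per J PD P1 P2)"
    and v: "v \<in> vanishing_outside (dofs per J PD P1 P2)"
  defines "R \<equiv> nodal_of_dofs per J" and "S \<equiv> dofs per J PD P1 P2"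
  shows "\<bar>disc_form lump J Xn dt P1 P2 rh (R w) (R v) - disc_form lump J Xn dt P1 P2 rh (R w') (R v)\<bar>
    \<le> 4 * \<bar>Lipschitz_const\<bar> * real (card S) * L2_set (\<lambda>i. w i - w' i) S * L2_set v S"
proof -
  define n where "n = sqrt (real (card S))"
  define a where "a = (\<Sum>i\<le>J. norm (R (\<lambda>i. w i - w' i) i))"
  define b where "b = (\<Sum>i\<le>J. norm (R v i))"
  have "(\<lambda>i. w i - w' i) \<in> vanishing_outside (dofs per J PD P1 P2)"
    using assms by (simp add: vanishing_outside_def)
  from sum_norm_nodal_of_dofs_le[OF this] sum_norm_nodal_of_dofs_le[OF v]
  have "a \<le> 2 * n * L2_set (\<lambda>i. w i - w' i) S" "b \<le> 2 * n * L2_set v S"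
    by (simp_all add: a_def b_def n_def S_def R_def)
  moreover have "0 \<le> a" "0 \<le> b" by (auto simp: a_def b_def intro: sum_nonneg)
  moreover have "\<bar>disc_form lump J Xn dt P1 P2 rh (R w) (R v) - disc_form lump J Xn dt P1 P2 rh (R w') (R v)\<bar>
      \<le> Lipschitz_const * a * b"
    using disc_form_Lipschitz[where c="R w" and c'="R w'" and v="R v"]
    unfolding a_def b_def R_def nodal_of_dofs_diff .
  ultimately have "\<bar>disc_form lump J Xn dt P1 P2 rh (R w) (R v) - disc_form lump J Xn dt P1 P2 rh (R w') (R v)\<bar>
      \<le> \<bar>Lipschitz_const\<bar> * (2 * n * L2_set (\<lambda>i. w i - w' i) S) * (2 * n * L2_set v S)"
    by (smt (verit, best) abs_ge_self mult_mono mult_nonneg_nonneg mult_right_mono abs_ge_zero)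
  also have "\<dots> = 4 * \<bar>Lipschitz_const\<bar> * (n * n) * L2_set (\<lambda>i. w i - w' i) S * L2_set v S"
    by (simp add: algebra_simps)
  finally show ?thesis by (simp add: n_def)
qed

lemma disc_form_has_zero:
  assumes bdry: "PD \<union> P1 \<union> P2 \<subseteq> bdry per"
  shows "\<exists>c. (per \<longrightarrow> c J = c 0) \<and> nodal_interp J c \<in> Vh_bd per J PD {} P1 P2
    \<and> (\<forall>eta\<in>Vh_bd per J PD P0 P1 P2. disc_form lump J Xn dt P1 P2 rh c (nodal J eta) = 0)"
proof -
  define S where "S = dofs per J PD P1 P2"
  define R where "R = nodal_of_dofs per J"
  define \<Psi> where "\<Psi> w v = disc_form lump J Xn dt P1 P2 rh (R w) (R v)" for w v
  have "\<exists>w\<in>vanishing_outside S. \<forall>v\<in>vanishing_outside S. \<Psi> w v = 0"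
  proof (rule strongly_monotone_form_has_zero[OF _ coercivity_pos])
    show "finite S" unfolding S_def by (rule finite_dofs)
    show "\<Psi> w (\<lambda>i. u i + v i) = \<Psi> w u + \<Psi> w v" for w u v
      unfolding \<Psi>_def R_def nodal_of_dofs_add by (rule disc_form_add)
    show "\<Psi> w (\<lambda>i. a * u i) = a * \<Psi> w u" for w u a
      unfolding \<Psi>_def R_def nodal_of_dofs_scale by (rule disc_form_scale)
  qed (unfold \<Psi>_def R_def S_def, erule (1) disc_form_dofs_strongly_monotone, erule (2) disc_form_dofs_Lipschitz)
  then obtain w where w: "w \<in> vanishing_outside S" and zero: "\<And>v. v \<in> vanishing_outside S \<Longrightarrow> \<Psi> w v = 0"
    by blast
  show ?thesis
  proof (intro exI conjI ballI)
    show "per \<longrightarrow> R w J = R w 0" by (simp add: R_def nodal_of_dofs_def periodic_index_def)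
    show "nodal_interp J (R w) \<in> Vh_bd per J PD {} P1 P2"
      unfolding R_def by (rule nodal_interp_dofs_in_Vh_bd[OF J w[unfolded S_def] bdry])
    fix eta assume eta: "eta \<in> Vh_bd per J PD P0 P1 P2"
    obtain v where v: "v \<in> vanishing_outside S" and nodes: "\<And>i. i \<le> J \<Longrightarrow> nodal J eta i = R v i"
      using Vh_bd_nodal_eq_nodal_of_dofs[OF J eta bdry, folded S_def R_def] by blast
    have "disc_form lump J Xn dt P1 P2 rh (R w) (nodal J eta) = \<Psi> w v"
      unfolding \<Psi>_def using nodes by (rule disc_form_cong)
    then show "disc_form lump J Xn dt P1 P2 rh (R w) (nodal J eta) = 0"
      using zero[OF v] by simp
  qed
qed

end

lemma compact_INF_pos:
  fixes f :: "'a::topological_space \<Rightarrow> real"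
  assumes "compact S" "S \<noteq> {}" "continuous_on S f" "\<And>x. x \<in> S \<Longrightarrow> f x > 0"
  shows "(INF x\<in>S. f x) > 0" "\<And>y. y \<in> S \<Longrightarrow> (INF x\<in>S. f x) \<le> f y"
proof -
  obtain x0 where x0: "x0 \<in> S" "\<And>y. y \<in> S \<Longrightarrow> f x0 \<le> f y"
    using continuous_attains_inf[OF assms(1-3)] by blast
  have "(INF x\<in>S. f x) = f x0"
    using x0 by (intro antisym cINF_lower cINF_greatest bdd_belowI2) auto
  then show "(INF x\<in>S. f x) > 0" "\<And>y. y \<in> S \<Longrightarrow> (INF x\<in>S. f x) \<le> f y"
    using x0 assms(4) by auto
qed

lemma norm_elem_slope_pos:
  assumes X: "X \<in> Vh per J" and J: "J > 0" and j: "j \<in> {1..J}"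
    and N: "negligible N" "\<forall>r\<in>{0..1} - N. norm (drho X r) > 0"
  shows "norm (elem_slope J (nodal J X) j) > 0"
proof (rule ccontr)
  assume "\<not> norm (elem_slope J (nodal J X) j) > 0"
  then have "drho X t = 0" if "t \<in> {node J (j - 1)<..<node J j}" for t
    using drho_Vh[OF X J j that] by simp
  then have "{node J (j - 1)<..<node J j} \<subseteq> N"
    using N(2) element_subset[OF j] by (force simp: element_def)
  then have "box (node J (j - 1)) (node J j) = {}"
    using negligible_subset[OF N(1)] negligible_interval(2) by (metis box_real(1))
  moreover have "node J (j - 1) < node J j" using node_less[OF J] j by simp
  ultimately show False by (simp add: box_real)
qed

lemma discrete_step_of_Vh:
  assumes J: "J > 0" and X: "X \<in> Vh per J"
    and A1: "\<exists>N. negligible N \<and> (\<forall>r\<in>{0..1} - N. norm (drho X r) > 0)"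
    and m: "m > 0" "\<And>r. r \<in> {0..1} \<Longrightarrow> m \<le> X r \<bullet> e1"
    and dt: "0 < dt" "dt < 4 * m\<^sup>2" and P2: "P2 \<subseteq> {0, 1}"
  shows "discrete_step J (nodal J X) dt m P2"
proof
  show "m \<le> elem_interp J (nodal J X) j t \<bullet> e1" if "j \<in> {1..J}" "t \<in> element J j" for j t
    using m(2)[of t] Vh_eq_elem_interp[OF X J that] element_subset[OF that(1)] that(2) by auto
  show "norm (elem_slope J (nodal J X) j) > 0" if "j \<in> {1..J}" for j
    using A1 norm_elem_slope_pos[OF X J that] by blast
qed (use assms in auto)

lemma nodal_interp_scale: "(\<lambda>r. a *\<^sub>R nodal_interp J c r) = nodal_interp J (\<lambda>i. a *\<^sub>R c i)"
  by (simp add: nodal_interp_def scaleR_sum_right fun_eq_iff mult.commute)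

theorem theorem4p5:
  fixes per lump :: bool and J :: nat
    and PD P0 P1 P2 :: "real set" and rho_hat :: "real \<Rightarrow> real"
    and X :: "real \<Rightarrow> real \<times> real" and dt :: real
  assumes J: "J \<ge> 3"
    and partition: "PD \<union> P0 \<union> P1 \<union> P2 = bdry per"
      "PD \<inter> P0 = {}" "PD \<inter> P1 = {}" "PD \<inter> P2 = {}"
      "P0 \<inter> P1 = {}" "P0 \<inter> P2 = {}" "P1 \<inter> P2 = {}"
    and rho_hat: "\<bar>rho_hat 0\<bar> \<le> 1" "\<bar>rho_hat 1\<bar> \<le> 1"
    and P0_empty: "P0 = {}"
    and X: "X \<in> Vh per J"
    and A1: "\<exists>N. negligible N \<and> (\<forall>r\<in>{0..1} - N. norm (drho X r) > 0)"
    and A2: "\<forall>r\<in>{0..1} - P0. X r \<bullet> e1 > 0"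
    and dt: "0 < dt" "dt < 3 * (INF r\<in>{0..1}. X r \<bullet> e1)\<^sup>2"
  shows "\<exists>dX kappa. dX \<in> Vh_bd per J PD P0 P1 P2 \<and> kappa \<in> Vh per J \<and>
    (let X1 = (\<lambda>r. X r + dX r) in
      (\<forall>chi\<in>Vh per J.
         sharp_ip lump J (\<lambda>r. ((X r \<bullet> e1) *\<^sub>R ((1 / dt) *\<^sub>R (X1 r - X r))) \<bullet> (norm (drho X r) *\<^sub>R chi r))
       = sharp_ip lump J (\<lambda>r. ((X r \<bullet> e1) *\<^sub>R kappa r) \<bullet> (norm (drho X r) *\<^sub>R chi r)))
    \<and> (\<forall>eta\<in>Vh_bd per J PD P0 P1 P2.
         sharp_ip lump J (\<lambda>r. ((X r \<bullet> e1) *\<^sub>R kappa r) \<bullet> (norm (drho X r) *\<^sub>R eta r))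
         + exact_ip (\<lambda>r. (eta r \<bullet> e1) * norm (drho X1 r))
         + exact_ip (\<lambda>r. ((X r \<bullet> e1) *\<^sub>R drho X1 r) \<bullet> (inverse (norm (drho X r)) *\<^sub>R drho eta r))
       = - (\<Sum>p\<in>P1. rho_hat p * (X p \<bullet> e1) * (eta p \<bullet> e2))
         - (\<Sum>p\<in>P2. ((posp (rho_hat p) *\<^sub>R X1 p + negp (rho_hat p) *\<^sub>R X p) \<bullet> e1) * (eta p \<bullet> e1))))"
proof -
  have J0: "J > 0" using J by simp
  define m where "m = (INF r\<in>{0..1}. X r \<bullet> e1)"
  have "continuous_on {0..1} (\<lambda>r. X r \<bullet> e1)"
    using X by (auto simp: Vh_def intro!: continuous_intros)
  moreover have "\<And>r. r \<in> {0..1} \<Longrightarrow> X r \<bullet> e1 > 0" using A2 P0_empty by auto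
  ultimately have m: "m > 0" "\<And>r. r \<in> {0..1} \<Longrightarrow> m \<le> X r \<bullet> e1"
    unfolding m_def using compact_INF_pos[OF compact_Icc, of 0 1] by auto
  have bd: "PD \<union> P1 \<union> P2 \<subseteq> bdry per" and P: "P1 \<subseteq> {0, 1}" "P2 \<subseteq> {0, 1}"
    using partition(1) by (auto simp: bdry_def split: if_splits)
  interpret discrete_step J "nodal J X" dt m lump P1 P2 rho_hat
    using dt m by (intro discrete_step_of_Vh[OF J0 X A1 m]) (auto simp: m_def power2_eq_square P)
  obtain c where per: "per \<longrightarrow> c J = c 0" and dX: "nodal_interp J c \<in> Vh_bd per J PD P0 P1 P2"
    and zero: "\<And>eta. eta \<in> Vh_bd per J PD P0 P1 P2 \<Longrightarrow> disc_form lump J (nodal J X) dt P1 P2 rho_hat c (nodal J eta) = 0"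
    using disc_form_has_zero[OF bd] P0_empty by blast
  have kappa: "(\<lambda>r. (1 / dt) *\<^sub>R nodal_interp J c r) \<in> Vh per J"
    unfolding nodal_interp_scale using per by (intro nodal_interp_in_Vh[OF J0]) auto
  show ?thesis
  proof (intro exI[of _ "nodal_interp J c"] exI[of _ "\<lambda>r. (1 / dt) *\<^sub>R nodal_interp J c r"] conjI dX kappa,
      unfold Let_def, intro conjI ballI)
    fix eta assume eta: "eta \<in> Vh_bd per J PD P0 P1 P2"
    then have "eta \<in> Vh per J" by (simp add: Vh_bd_def)
    from Vh_forms_eq_disc_form[OF J0 X per this P, of lump dt rho_hat] zero[OF eta]
    show "sharp_ip lump J (\<lambda>r. ((X r \<bullet> e1) *\<^sub>R ((1 / dt) *\<^sub>R nodal_interp J c r)) \<bullet> (norm (drho X r) *\<^sub>R eta r))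
         + exact_ip (\<lambda>r. (eta r \<bullet> e1) * norm (drho (\<lambda>r. X r + nodal_interp J c r) r))
         + exact_ip (\<lambda>r. ((X r \<bullet> e1) *\<^sub>R drho (\<lambda>r. X r + nodal_interp J c r) r) \<bullet> (inverse (norm (drho X r)) *\<^sub>R drho eta r))
       = - (\<Sum>p\<in>P1. rho_hat p * (X p \<bullet> e1) * (eta p \<bullet> e2))
         - (\<Sum>p\<in>P2. ((posp (rho_hat p) *\<^sub>R (X p + nodal_interp J c p) + negp (rho_hat p) *\<^sub>R X p) \<bullet> e1) * (eta p \<bullet> e1))"
      by simp
  qed simp
qed

end
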